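(* Let $A=(a_{ik})$ be a real symmetric $n\times n$ matrix whose induced signed graph $\Gamma=(T,\sigma)$, $T=(V,E)$, has no cycle. Let $\lambda_k$ be the $k$-th eigenvalue of $A$, of multiplicity $r$, with $$\lambda_1\le\cdots\le\lambda_{k-1}<\lambda_k=\cdots=\lambda_{k+r-1}<\lambda_{k+r}\le\cdots\le\lambda_n$$ (strict inequalities vacuous when indices are out of range), and let $f_k$ be an eigenfunction for $\lambda_k$. Let $\mathcal F=\{x\in V: f_k(x)=0\text{ and }f_k(y)=0\text{ for all }y\sim x\}$. Then $$k+r-1-|\mathcal F|\le\mathfrak{S}(f_k)\le k+r-1\quad\text{and}\quad n-k+1-|\mathcal F|\le\overline{\mathfrak{S}}(f_k)\le n-k+1,$$ where $\overline{\mathfrak{S}}(f_k)$ is the number of strong nodal domains of $f_k$ on $-\Gamma=(T,-\sigma)$.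
   Context: The induced signed graph of a real symmetric $n\times n$ matrix $A$ has vertex set $V=\{x_1,\dots,x_n\}$, edge $\{x_i,x_j\}$ iff $i\ne j$ and $a_{ij}\ne0$, sign $\sigma_{x_ix_j}=-a_{ij}/|a_{ij}|$. Eigenfunctions are nonzero eigenvectors viewed as functions on $V$. A walk is $y_1,\dots,y_m$ ($m\ge2$) with consecutive vertices adjacent; for a signature $\sigma$, an S-walk of $f$ is a walk with $f(y_j)\sigma_{y_jy_{j+1}}f(y_{j+1})>0$ for all $j$. The strong nodal domains of $f$ on $(T,\sigma)$ are the induced subgraphs on the equivalence classes of the relation on $\{x:f(x)\ne0\}$ "$x=y$ or an S-walk connects $x$ and $y$"; $\mathfrak{S}(f)$ denotes their number on $\Gamma=(T,\sigma)$. *)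

theory Defs
  imports "Jordan_Normal_Form.Char_Poly"
begin

text \<open>Induced signed graph of a real n x n matrix A: vertices 0..<n (vertex i stands for x_(i+1)).\<close>

definition adj :: "real mat \<Rightarrow> nat \<Rightarrow> nat \<Rightarrow> bool" where
  "adj A i j \<longleftrightarrow> i < dim_row A \<and> j < dim_row A \<and> i \<noteq> j \<and> A $$ (i, j) \<noteq> 0"

definition sig :: "real mat \<Rightarrow> nat \<Rightarrow> nat \<Rightarrow> real" where
  "sig A i j = - A $$ (i, j) / \<bar>A $$ (i, j)\<bar>"

definition has_cycle :: "real mat \<Rightarrow> bool" where
  "has_cycle A \<longleftrightarrow> (\<exists>cs. length cs \<ge> 3 \<and> distinct cs \<and>
      (\<forall>j < length cs - 1. adj A (cs ! j) (cs ! Suc j)) \<and> adj A (last cs) (hd cs))"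

definition is_walk :: "real mat \<Rightarrow> nat list \<Rightarrow> bool" where
  "is_walk A ys \<longleftrightarrow> length ys \<ge> 2 \<and> (\<forall>j < length ys - 1. adj A (ys ! j) (ys ! Suc j))"

definition S_walk :: "real mat \<Rightarrow> (nat \<Rightarrow> nat \<Rightarrow> real) \<Rightarrow> real vec \<Rightarrow> nat list \<Rightarrow> bool" where
  "S_walk A s f ys \<longleftrightarrow> is_walk A ys \<and>
     (\<forall>j < length ys - 1. f $ (ys ! j) * s (ys ! j) (ys ! Suc j) * f $ (ys ! Suc j) > 0)"

definition nodal_rel :: "real mat \<Rightarrow> (nat \<Rightarrow> nat \<Rightarrow> real) \<Rightarrow> real vec \<Rightarrow> (nat \<times> nat) set" where
  "nodal_rel A s f = {(x, y). x < dim_row A \<and> y < dim_row A \<and> f $ x \<noteq> 0 \<and> f $ y \<noteq> 0 \<and>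
      (x = y \<or> (\<exists>ys. S_walk A s f ys \<and> hd ys = x \<and> last ys = y))}"

definition strong_nodal_count :: "real mat \<Rightarrow> (nat \<Rightarrow> nat \<Rightarrow> real) \<Rightarrow> real vec \<Rightarrow> nat" where
  "strong_nodal_count A s f = card ({x. x < dim_row A \<and> f $ x \<noteq> 0} // nodal_rel A s f)"

end

theory Submission
  imports Defs "Jordan_Normal_Form.Jordan_Normal_Form_Uniqueness" "Jordan_Normal_Form.Jordan_Normal_Form_Existence"
begin

text \<open>
  Put M = A - \<lambda>_k I and let f be the eigenfunction, so M f = 0; a strong nodal edge is an edge xy
  with f x M_xy f y < 0. The count k + r - 1 is the number of eigenvalues of A that are \<le> \<lambda>_k, i.e.
  the number of nonpositive eigenvalues of M, and by Courant-Fischer it is the largest dimension of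
  a subspace on which the quadratic form of M is \<le> 0.

  Upper bound: for every c, 2 (c f)^T M (c f) = - \<Sum>_xy (c x - c y)^2 f x M_xy f y, so the form is
  \<le> 0 on the S(f)-dimensional space of vectors c f with c constant on each strong nodal domain.

  Lower bound: induction on the forest. A leaf v is eliminated by a Schur complement at its
  neighbour w (or, if M_vv = 0, together with w, where then f w = 0); this raises the number of
  nonpositive eigenvalues by at most one, and only when v forms a nodal domain of its own or is a
  flat zero. Hence M is positive definite on a subspace of codimension S(f) + |F|.

  The statement for -\<Gamma> is the same argument for -A and -\<lambda>_k, whose nonpositive eigenvalues are the
  n - k + 1 eigenvalues of A that are \<ge> \<lambda>_k.
\<close>

section \<open>Quadratic forms and eigenbases\<close>

lemma back_substitution:
  fixes l e c' :: "'a \<Rightarrow> real"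
  assumes fin: "finite T" and t0: "t0 \<in> T" "e t0 \<noteq> 0"
    and reduced: "(\<Sum>t\<in>T - {t0}. (l t - l t0 / e t0 * e t) * c' t) = 0"
  shows "(\<Sum>t\<in>T. l t * (if t = t0 then - (\<Sum>s\<in>T - {t0}. e s * c' s) / e t0 else c' t)) = 0"
proof -
  let ?c = "\<lambda>t. if t = t0 then - (\<Sum>s\<in>T - {t0}. e s * c' s) / e t0 else c' t"
  have "(\<Sum>t\<in>T. l t * ?c t) = l t0 * ?c t0 + (\<Sum>t\<in>T - {t0}. l t * ?c t)"
    using fin t0(1) by (rule sum.remove)
  also have "(\<Sum>t\<in>T - {t0}. l t * ?c t) = (\<Sum>t\<in>T - {t0}. l t * c' t)"
    by (intro sum.cong) auto
  also have "\<dots> = l t0 / e t0 * (\<Sum>t\<in>T - {t0}. e t * c' t)"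
    using reduced by (simp add: algebra_simps sum_subtractf sum_distrib_left)
  finally show ?thesis by simp
qed

lemma homogeneous_system_nontrivial_solution:
  fixes L :: "('a \<Rightarrow> real) list"
  assumes "finite T" and "length L < card T"
  shows "\<exists>c. (\<exists>t\<in>T. c t \<noteq> 0) \<and> (\<forall>l\<in>set L. (\<Sum>t\<in>T. l t * c t) = 0)"
  using assms
proof (induction "length L" arbitrary: L T)
  case 0
  then obtain t where "t \<in> T" "L = []" by fastforce
  then show ?case by (intro exI[of _ "\<lambda>_. 1"]) auto
next
  case (Suc k)
  then obtain l0 L0 where L: "L = l0 # L0" and k: "k = length L0"
    by (cases L) auto
  show ?case
  proof (cases "\<forall>t\<in>T. l0 t = 0")
    case True
    have "length L0 < card T" using Suc.prems L by simp
    with Suc.hyps(1)[OF k Suc.prems(1)] obtain c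
      where "\<exists>t\<in>T. c t \<noteq> 0" "\<forall>l\<in>set L0. (\<Sum>t\<in>T. l t * c t) = 0"
      by blast
    with True L show ?thesis by (intro exI[of _ c]) auto
  next
    case False
    then obtain t0 where t0: "t0 \<in> T" "l0 t0 \<noteq> 0" by auto
    \<comment> \<open>Gaussian elimination of the unknown at t0 by means of the equation l0.\<close>
    define L' where "L' = map (\<lambda>l t. l t - l t0 / l0 t0 * l0 t) L0"
    have "k = length L'" "finite (T - {t0})" "length L' < card (T - {t0})"
      using Suc.prems t0 k L unfolding L'_def by auto
    from Suc.hyps(1)[OF this] obtain c'
      where c': "\<exists>t\<in>T - {t0}. c' t \<noteq> 0" "\<forall>l\<in>set L'. (\<Sum>t\<in>T - {t0}. l t * c' t) = 0"
      by blast
    define c where "c t = (if t = t0 then - (\<Sum>s\<in>T - {t0}. l0 s * c' s) / l0 t0 else c' t)" for t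
    have "(\<Sum>t\<in>T. l t * c t) = 0" if "l \<in> set L" for l
      using that c'(2) t0(2) back_substitution[where l = l and e = l0 and c' = c', OF Suc.prems(1) t0]
      unfolding L c_def L'_def by auto
    moreover have "\<exists>t\<in>T. c t \<noteq> 0"
      using c'(1) unfolding c_def by auto
    ultimately show ?thesis by blast
  qed
qed

definition diag_shift :: "('a \<Rightarrow> 'a \<Rightarrow> real) \<Rightarrow> real \<Rightarrow> 'a \<Rightarrow> 'a \<Rightarrow> real" where
  "diag_shift a \<mu> x y = a x y - (if x = y then \<mu> else 0)"

definition qform :: "'a set \<Rightarrow> ('a \<Rightarrow> 'a \<Rightarrow> real) \<Rightarrow> ('a \<Rightarrow> real) \<Rightarrow> real" where
  "qform V a h = (\<Sum>x\<in>V. \<Sum>y\<in>V. h x * a x y * h y)"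

lemma diag_shift_uminus: "diag_shift (\<lambda>x y. - a x y) (- \<mu>) = (\<lambda>x y. - diag_shift a \<mu> x y)"
  by (auto simp: diag_shift_def fun_eq_iff)

lemma qform_uminus: "qform V (\<lambda>x y. - a x y) h = - qform V a h"
  by (simp add: qform_def sum_negf)

lemma sum_diag_shift:
  assumes "finite V" and "x \<in> V"
  shows "(\<Sum>y\<in>V. diag_shift a \<mu> x y * h y) = (\<Sum>y\<in>V. a x y * h y) - \<mu> * h x"
proof -
  have "(if x = y then \<mu> else 0) * h y = (if x = y then \<mu> * h x else 0)" for y
    by simp
  then show ?thesis
    using assms by (simp add: diag_shift_def left_diff_distrib sum_subtractf)
qed

locale eigenbasis =
  fixes n :: nat and a :: "nat \<Rightarrow> nat \<Rightarrow> real" and p :: "nat \<Rightarrow> nat \<Rightarrow> real" and d :: "nat \<Rightarrow> real"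
  assumes sym: "\<And>x y. x < n \<Longrightarrow> y < n \<Longrightarrow> a x y = a y x"
    and eigen: "\<And>i x. i < n \<Longrightarrow> x < n \<Longrightarrow> (\<Sum>y<n. a x y * p i y) = d i * p i x"
    and independent: "\<And>\<beta> i. \<forall>x<n. (\<Sum>i<n. \<beta> i * p i x) = 0 \<Longrightarrow> i < n \<Longrightarrow> \<beta> i = 0"
begin

lemma eigenbasis_uminus: "eigenbasis n (\<lambda>x y. - a x y) p (\<lambda>i. - d i)"
proof
  show "- a x y = - a y x" if "x < n" "y < n" for x y
    using sym that by simp
  show "(\<Sum>y<n. - a x y * p i y) = - d i * p i x" if "i < n" "x < n" for i x
    using eigen that by (simp add: sum_negf)
qed (fact independent)

lemma eigenvectors_orthogonal:
  assumes i: "i < n" and j: "j < n" and "d i \<noteq> d j"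
  shows "(\<Sum>x<n. p i x * p j x) = 0"
proof -
  have "d i * (\<Sum>x<n. p i x * p j x) = (\<Sum>x<n. (\<Sum>y<n. a x y * p i y) * p j x)"
    using eigen[OF i] by (simp add: sum_distrib_left mult_ac)
  also have "\<dots> = (\<Sum>x<n. \<Sum>y<n. a x y * p i y * p j x)"
    by (simp add: sum_distrib_right)
  also have "\<dots> = (\<Sum>y<n. \<Sum>x<n. a x y * p i y * p j x)"
    by (rule sum.swap)
  also have "\<dots> = (\<Sum>y<n. p i y * (\<Sum>x<n. a y x * p j x))"
    using sym by (simp add: sum_distrib_left mult_ac)
  also have "\<dots> = d j * (\<Sum>x<n. p i x * p j x)"
    using eigen[OF j] by (simp add: sum_distrib_left mult_ac)
  finally show ?thesis using assms(3) by (simp add: algebra_simps)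
qed

lemma combination_nonzero:
  assumes T: "T \<subseteq> {..<n}" and "\<exists>i\<in>T. \<beta> i \<noteq> 0"
  shows "\<exists>x<n. (\<Sum>i\<in>T. \<beta> i * p i x) \<noteq> 0"
proof (rule ccontr)
  assume contra: "\<not> ?thesis"
  have "(if i \<in> T then \<beta> i else 0) * p i x = (if i \<in> T then \<beta> i * p i x else 0)" for i x
    by simp
  then have sum_T: "(\<Sum>i<n. (if i \<in> T then \<beta> i else 0) * p i x) = (\<Sum>i\<in>T. \<beta> i * p i x)" for x
    using T by (simp add: sum.inter_restrict[symmetric] Int_absorb1)
  then have "i < n \<Longrightarrow> (if i \<in> T then \<beta> i else 0) = 0" for i
    using contra by (intro independent) (auto simp: sum_T)
  with assms show False by force
qed

lemma exists_orthogonal_combination: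
  fixes L :: "(nat \<Rightarrow> real) list"
  assumes T: "T \<subseteq> {..<n}" and "length L < card T"
  shows "\<exists>\<beta>. (\<exists>i\<in>T. \<beta> i \<noteq> 0) \<and> (\<forall>l\<in>set L. (\<Sum>x<n. l x * (\<Sum>i\<in>T. \<beta> i * p i x)) = 0)"
proof -
  have "finite T" using T finite_subset by blast
  from homogeneous_system_nontrivial_solution[OF this, of "map (\<lambda>l i. \<Sum>x<n. l x * p i x) L"]
  obtain \<beta> where \<beta>: "\<exists>i\<in>T. \<beta> i \<noteq> 0"
    "\<forall>l\<in>set (map (\<lambda>l i. \<Sum>x<n. l x * p i x) L). (\<Sum>i\<in>T. l i * \<beta> i) = 0"
    using assms(2) by auto
  have "(\<Sum>x<n. l x * (\<Sum>i\<in>T. \<beta> i * p i x)) = (\<Sum>i\<in>T. (\<Sum>x<n. l x * p i x) * \<beta> i)" for l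
    by (simp add: sum_distrib_left sum_distrib_right mult_ac sum.swap[of _ T])
  with \<beta> show ?thesis by auto
qed

lemma qform_combination:
  assumes T: "T \<subseteq> {..<n}"
  shows "qform {..<n} (diag_shift a \<mu>) (\<lambda>x. \<Sum>i\<in>T. \<beta> i * p i x)
     = (\<Sum>i\<in>T. \<Sum>j\<in>T. \<beta> i * \<beta> j * (d j - \<mu>) * (\<Sum>x<n. p i x * p j x))"
proof -
  define h where "h x = (\<Sum>i\<in>T. \<beta> i * p i x)" for x
  have row: "(\<Sum>y<n. diag_shift a \<mu> x y * h y) = (\<Sum>j\<in>T. \<beta> j * (d j - \<mu>) * p j x)"
    if x: "x < n" for x
  proof -
    have "(\<Sum>y<n. a x y * h y) = (\<Sum>y<n. \<Sum>j\<in>T. \<beta> j * (a x y * p j y))"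
      unfolding h_def by (simp add: sum_distrib_left mult_ac)
    also have "\<dots> = (\<Sum>j\<in>T. \<beta> j * (\<Sum>y<n. a x y * p j y))"
      by (simp add: sum.swap[of _ "{..<n}"] sum_distrib_left)
    also have "\<dots> = (\<Sum>j\<in>T. \<beta> j * (d j * p j x))"
      using eigen x T by (intro sum.cong) auto
    finally have "(\<Sum>y<n. diag_shift a \<mu> x y * h y) = (\<Sum>j\<in>T. \<beta> j * (d j * p j x)) - \<mu> * h x"
      using x by (simp add: sum_diag_shift)
    then show ?thesis
      unfolding h_def by (simp add: algebra_simps sum_subtractf sum_distrib_left)
  qed
  have "qform {..<n} (diag_shift a \<mu>) h = (\<Sum>x<n. h x * (\<Sum>y<n. diag_shift a \<mu> x y * h y))"
    unfolding qform_def by (simp add: sum_distrib_left mult.assoc)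
  also have "\<dots> = (\<Sum>x<n. h x * (\<Sum>j\<in>T. \<beta> j * (d j - \<mu>) * p j x))"
    using row by simp
  also have "\<dots> = (\<Sum>x<n. \<Sum>i\<in>T. \<Sum>j\<in>T. \<beta> i * \<beta> j * (d j - \<mu>) * (p i x * p j x))"
    unfolding h_def sum_product by (simp add: mult_ac)
  also have "\<dots> = (\<Sum>i\<in>T. \<Sum>j\<in>T. \<beta> i * \<beta> j * (d j - \<mu>) * (\<Sum>x<n. p i x * p j x))"
    by (simp add: sum_distrib_left sum.swap[of _ "{..<n}"])
  finally show ?thesis unfolding h_def .
qed

lemma qform_combination_sum_squares:
  assumes T: "T \<subseteq> {..<n}" and ge: "\<forall>i\<in>T. \<mu> \<le> d i"
  shows "qform {..<n} (diag_shift a \<mu>) (\<lambda>x. \<Sum>i\<in>T. \<beta> i * p i x)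
     = (\<Sum>x<n. (\<Sum>i\<in>T. \<beta> i * sqrt (d i - \<mu>) * p i x)\<^sup>2)"
proof -
  define g where "g i = \<beta> i * sqrt (d i - \<mu>)" for i
  have g: "g i * g j * (\<Sum>x<n. p i x * p j x) = \<beta> i * \<beta> j * (d j - \<mu>) * (\<Sum>x<n. p i x * p j x)"
    if ij: "i \<in> T" "j \<in> T" for i j
  proof (cases "d i = d j")
    case True
    have "sqrt (d j - \<mu>) * sqrt (d j - \<mu>) = d j - \<mu>"
      using ge ij by simp
    moreover have "g i * g j = \<beta> i * \<beta> j * (sqrt (d j - \<mu>) * sqrt (d j - \<mu>))"
      unfolding g_def True by (simp add: mult_ac)
    ultimately show ?thesis by simp
  next
    case False
    then show ?thesis using eigenvectors_orthogonal ij T by auto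
  qed
  have "(\<Sum>x<n. (\<Sum>i\<in>T. g i * p i x)\<^sup>2) = (\<Sum>x<n. \<Sum>i\<in>T. \<Sum>j\<in>T. g i * g j * (p i x * p j x))"
    by (simp add: power2_eq_square sum_distrib_left sum_distrib_right mult_ac)
  also have "\<dots> = (\<Sum>i\<in>T. \<Sum>j\<in>T. g i * g j * (\<Sum>x<n. p i x * p j x))"
    by (simp add: sum_distrib_left sum.swap[of _ "{..<n}"])
  also have "\<dots> = qform {..<n} (diag_shift a \<mu>) (\<lambda>x. \<Sum>i\<in>T. \<beta> i * p i x)"
    unfolding qform_combination[OF T] using g by (intro sum.cong refl) auto
  finally show ?thesis unfolding g_def ..
qed

lemma exists_orthogonal_qform_pos:
  fixes L :: "(nat \<Rightarrow> real) list"
  assumes T: "T \<subseteq> {..<n}" and gt: "\<forall>i\<in>T. \<mu> < d i" and len: "length L < card T"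
  shows "\<exists>h. (\<exists>x<n. h x \<noteq> 0) \<and> (\<forall>l\<in>set L. (\<Sum>x<n. l x * h x) = 0)
           \<and> 0 < qform {..<n} (diag_shift a \<mu>) h"
proof -
  obtain \<beta> where \<beta>: "\<exists>i\<in>T. \<beta> i \<noteq> 0" "\<forall>l\<in>set L. (\<Sum>x<n. l x * (\<Sum>i\<in>T. \<beta> i * p i x)) = 0"
    using exists_orthogonal_combination[OF T len] by blast
  define g where "g i = \<beta> i * sqrt (d i - \<mu>)" for i
  have "\<exists>i\<in>T. g i \<noteq> 0"
    using \<beta>(1) gt unfolding g_def by force
  from combination_nonzero[OF T this]
  obtain x where x: "x < n" "(\<Sum>i\<in>T. g i * p i x) \<noteq> 0"
    by blast
  have "0 < (\<Sum>i\<in>T. g i * p i x)\<^sup>2"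
    using x by simp
  also have "\<dots> \<le> (\<Sum>x<n. (\<Sum>i\<in>T. g i * p i x)\<^sup>2)"
    by (rule member_le_sum) (use x in auto)
  also have "\<dots> = qform {..<n} (diag_shift a \<mu>) (\<lambda>x. \<Sum>i\<in>T. \<beta> i * p i x)"
    unfolding g_def using gt
    by (intro qform_combination_sum_squares[OF T, symmetric]) (simp add: less_imp_le)
  finally show ?thesis
    using combination_nonzero[OF T \<beta>(1)] \<beta>(2)
    by (intro exI[of _ "\<lambda>x. \<Sum>i\<in>T. \<beta> i * p i x"]) simp
qed

lemma exists_orthogonal_qform_nonpos:
  fixes L :: "(nat \<Rightarrow> real) list"
  assumes T: "T \<subseteq> {..<n}" and le: "\<forall>i\<in>T. d i \<le> \<mu>" and len: "length L < card T"
  shows "\<exists>h. (\<exists>x<n. h x \<noteq> 0) \<and> (\<forall>l\<in>set L. (\<Sum>x<n. l x * h x) = 0)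
           \<and> qform {..<n} (diag_shift a \<mu>) h \<le> 0"
proof -
  interpret neg: eigenbasis n "\<lambda>x y. - a x y" p "\<lambda>i. - d i"
    by (rule eigenbasis_uminus)
  obtain \<beta> where \<beta>: "\<exists>i\<in>T. \<beta> i \<noteq> 0" "\<forall>l\<in>set L. (\<Sum>x<n. l x * (\<Sum>i\<in>T. \<beta> i * p i x)) = 0"
    using exists_orthogonal_combination[OF T len] by blast
  have "\<forall>i\<in>T. - \<mu> \<le> - d i"
    using le by simp
  from neg.qform_combination_sum_squares[OF T this]
  have "0 \<le> qform {..<n} (diag_shift (\<lambda>x y. - a x y) (- \<mu>)) (\<lambda>x. \<Sum>i\<in>T. \<beta> i * p i x)"
    by (simp add: sum_nonneg)
  then have "qform {..<n} (diag_shift a \<mu>) (\<lambda>x. \<Sum>i\<in>T. \<beta> i * p i x) \<le> 0"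
    by (simp add: diag_shift_uminus qform_uminus)
  then show ?thesis
    using combination_nonzero[OF T \<beta>(1)] \<beta>(2)
    by (intro exI[of _ "\<lambda>x. \<Sum>i\<in>T. \<beta> i * p i x"]) simp
qed

end

section \<open>Diagonalisation of real symmetric matrices\<close>

lemma le_one_if_sum_list_min2_eq_min1:
  fixes xs :: "nat list"
  assumes "sum_list (map (min 2) xs) = sum_list (map (min 1) xs)"
  shows "\<forall>x\<in>set xs. x \<le> 1"
  using assms
proof (induction xs)
  case Nil
  then show ?case by simp
next
  case (Cons a xs)
  have "sum_list (map (min 1) xs) \<le> sum_list (map (min 2) xs)"
    by (intro sum_list_mono) auto
  moreover have "min 1 a \<le> min 2 a" by auto
  ultimately have "min 2 a = min 1 a" and "sum_list (map (min 2) xs) = sum_list (map (min 1) xs)"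
    using Cons.prems by auto
  then show ?case using Cons.IH by auto
qed

lemma char_matrix_symmetric:
  assumes A: "A \<in> carrier_mat n n" and sym: "A\<^sup>T = A"
  shows "(char_matrix A e)\<^sup>T = char_matrix A e"
proof (rule eq_matI)
  fix i j assume "i < dim_row (char_matrix A e)" "j < dim_col (char_matrix A e)"
  then have ij: "i < n" "j < n" using char_matrix_closed[OF A, of e] by auto
  have "A $$ (j, i) = A $$ (i, j)"
    using sym ij A by (metis carrier_matD(1) carrier_matD(2) index_transpose_mat(1))
  then show "(char_matrix A e)\<^sup>T $$ (i, j) = char_matrix A e $$ (i, j)"
    using ij A by (auto simp: char_matrix_def)
qed (use char_matrix_closed[OF A, of e] in auto)

lemma mat_kernel_square_symmetric:
  fixes C :: "real mat"
  assumes C: "C \<in> carrier_mat n n" and sym: "C\<^sup>T = C"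
  shows "mat_kernel (C * C) = mat_kernel C"
proof -
  have "v \<in> mat_kernel (C * C) \<longleftrightarrow> v \<in> mat_kernel C" for v
  proof
    assume "v \<in> mat_kernel (C * C)"
    then have v: "v \<in> carrier_vec n" and CCv: "(C * C) *\<^sub>v v = 0\<^sub>v n"
      using C unfolding mat_kernel_def by auto
    define w where "w = C *\<^sub>v v"
    have w: "w \<in> carrier_vec n" using C v w_def by auto
    have Cw: "C *\<^sub>v w = 0\<^sub>v n"
      using CCv C v unfolding w_def by (simp add: assoc_mult_mat_vec)
    \<comment> \<open>For symmetric C, the squared length of C v is v \<bullet> C (C v) = 0.\<close>
    have "w \<bullet> w = (C\<^sup>T *\<^sub>v v) \<bullet> w" using sym w_def by simp
    also have "\<dots> = v \<bullet> (C *\<^sub>v w)" by (rule transpose_vec_mult_scalar[OF C w v])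
    also have "\<dots> = 0" using Cw v by simp
    finally have "w \<bullet>c w = 0" by (simp add: conjugate_real_def[abs_def] conjugate_vec_def)
    then have "w = 0\<^sub>v n" using conjugate_square_eq_0_vec[OF w] by simp
    then show "v \<in> mat_kernel C" using v C unfolding mat_kernel_def w_def by auto
  next
    assume "v \<in> mat_kernel C"
    then have v: "v \<in> carrier_vec n" and Cv: "C *\<^sub>v v = 0\<^sub>v n"
      using C unfolding mat_kernel_def by auto
    have "(C * C) *\<^sub>v v = C *\<^sub>v (C *\<^sub>v v)" using C v by (simp add: assoc_mult_mat_vec)
    also have "\<dots> = 0\<^sub>v n" using Cv C by (intro eq_vecI) (auto simp: scalar_prod_def)
    finally show "v \<in> mat_kernel (C * C)" using v C unfolding mat_kernel_def by auto
  qed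
  then show ?thesis by auto
qed

lemma jordan_nf_symmetric_block_sizes:
  fixes A :: "real mat"
  assumes A: "A \<in> carrier_mat n n" and sym: "A\<^sup>T = A" and jnf: "jordan_nf A n_as"
  shows "\<forall>x\<in>set n_as. fst x = 1"
proof
  fix x assume x: "x \<in> set n_as"
  obtain m ev where xe: "x = (m, ev)" by force
  let ?C = "char_matrix A ev"
  have C: "?C \<in> carrier_mat n n" using A by simp
  \<comment> \<open>Symmetry makes the generalized eigenspaces of orders 2 and 1 coincide, which rules out
    Jordan blocks of size 2 or more.\<close>
  have "?C ^\<^sub>m 2 = ?C * ?C" "?C ^\<^sub>m 1 = ?C"
    using C by (simp_all add: numeral_2_eq_2)
  then have "dim_gen_eigenspace A ev 2 = dim_gen_eigenspace A ev 1"
    unfolding dim_gen_eigenspace_def kernel_dim_def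
    using mat_kernel_square_symmetric[OF C char_matrix_symmetric[OF A sym]] by simp
  then have "sum_list (map (min 2) (map fst [(n, e)\<leftarrow>n_as . e = ev]))
       = sum_list (map (min 1) (map fst [(n, e)\<leftarrow>n_as . e = ev]))"
    unfolding dim_gen_eigenspace[OF jnf] by simp
  from le_one_if_sum_list_min2_eq_min1[OF this] have "m \<le> 1"
    using x xe by force
  moreover have "m \<noteq> 0" using jnf x xe unfolding jordan_nf_def by force
  ultimately show "fst x = 1" using xe by simp
qed

lemma jordan_matrix_block_sizes_one:
  assumes "\<forall>x\<in>set n_as. fst x = 1"
  shows "dim_row (jordan_matrix n_as) = length n_as \<and> dim_col (jordan_matrix n_as) = length n_as \<and>
    (\<forall>i j. i < length n_as \<longrightarrow> j < length n_as \<longrightarrow>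
      jordan_matrix n_as $$ (i, j) = (if i = j then snd (n_as ! i) else (0::real)))"
  using assms
proof (induction n_as)
  case Nil
  then show ?case by (simp add: jordan_matrix_def)
next
  case (Cons na n_as)
  obtain a where na: "na = (1, a)" using Cons.prems by (cases na) auto
  have sl: "sum_list (map fst n_as) = length n_as"
    using Cons.prems by (induction n_as) auto
  have J: "jordan_matrix (na # n_as) = four_block_mat (jordan_block 1 a) (0\<^sub>m 1 (length n_as))
     (0\<^sub>m (length n_as) 1) (jordan_matrix n_as)"
    unfolding na jordan_matrix_Cons sl ..
  from Cons have IH: "dim_row (jordan_matrix n_as) = length n_as"
    "dim_col (jordan_matrix n_as) = length n_as"
    "\<And>i j. i < length n_as \<Longrightarrow> j < length n_as \<Longrightarrow>
      jordan_matrix n_as $$ (i, j) = (if i = j then snd (n_as ! i) else 0)"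
    by auto
  show ?case
  proof (intro conjI allI impI)
    show "dim_row (jordan_matrix (na # n_as)) = length (na # n_as)"
      unfolding J using IH by simp
    show "dim_col (jordan_matrix (na # n_as)) = length (na # n_as)"
      unfolding J using IH by simp
    fix i j assume "i < length (na # n_as)" "j < length (na # n_as)"
    then show "jordan_matrix (na # n_as) $$ (i, j) = (if i = j then snd ((na # n_as) ! i) else 0)"
      unfolding J using IH by (cases i; cases j) (auto simp: index_mat_four_block na)
  qed
qed

lemma proots_prod_list_linear_factors:
  "proots (\<Prod>a\<leftarrow>xs. [:- a, 1:]) = mset (xs :: 'a :: idom list)"
proof (induction xs)
  case Nil
  then show ?case by simp
next
  case (Cons a xs)
  have nz: "(\<Prod>a\<leftarrow>xs. [:- a, 1:]) \<noteq> (0 :: 'a poly)"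
    by (auto simp: prod_list_zero_iff)
  have "proots (\<Prod>a\<leftarrow>a # xs. [:- a, 1:]) = proots ([:- a, 1:] * (\<Prod>a\<leftarrow>xs. [:- a, 1:]))"
    by (simp only: list.map prod_list.Cons)
  also have "\<dots> = proots [:- a, 1:] + proots (\<Prod>a\<leftarrow>xs. [:- a, 1:])"
    by (rule proots_mult) (simp, rule nz)
  finally show ?case using Cons.IH proots_linear_factor[of "- a"] by simp
qed

lemma prod_list_linear_factors_size_one:
  "\<forall>x\<in>set xs. fst x = 1 \<Longrightarrow> (\<Prod>(m, a)\<leftarrow>xs. [:- a, 1:] ^ m) = (\<Prod>a\<leftarrow>map snd xs. [:- a, 1:])"
  by (induction xs) auto

lemma jordan_nf_size_one_eigenvalues:
  fixes A :: "'a :: field mat"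
  assumes jnf: "jordan_nf A n_as" and sizes: "\<forall>x\<in>set n_as. fst x = 1"
    and cp: "char_poly A = (\<Prod>a\<leftarrow>es. [:- a, 1:])"
  shows "mset (map snd n_as) = mset es"
proof -
  have "(\<Prod>a\<leftarrow>map snd n_as. [:- a, 1:]) = char_poly (jordan_matrix n_as)"
    unfolding jordan_matrix_char_poly using prod_list_linear_factors_size_one[OF sizes] by simp
  also have "\<dots> = (\<Prod>a\<leftarrow>es. [:- a, 1:])"
    using char_poly_similar[of A "jordan_matrix n_as"] jnf cp unfolding jordan_nf_def by simp
  finally have "proots (\<Prod>a\<leftarrow>map snd n_as. [:- a, 1:]) = proots (\<Prod>a\<leftarrow>es. [:- a, 1:])"
    by simp
  then show ?thesis
    by (simp only: proots_prod_list_linear_factors)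
qed

lemma diagonalization_eigenvectors:
  fixes A P J :: "real mat"
  assumes A: "A \<in> carrier_mat n n" and P: "P \<in> carrier_mat n n" and J: "J \<in> carrier_mat n n"
    and AP: "A * P = P * J" and diag: "\<And>i j. i < n \<Longrightarrow> j < n \<Longrightarrow> J $$ (i, j) = (if i = j then d i else 0)"
    and i: "i < n" and x: "x < n"
  shows "(\<Sum>y<n. A $$ (x, y) * P $$ (y, i)) = d i * P $$ (x, i)"
proof -
  have "(\<Sum>y<n. A $$ (x, y) * P $$ (y, i)) = (A * P) $$ (x, i)"
    using A P i x by (simp add: scalar_prod_def atLeast0LessThan)
  also have "\<dots> = (\<Sum>y<n. P $$ (x, y) * J $$ (y, i))"
    using AP P J i x by (simp add: scalar_prod_def atLeast0LessThan)
  also have "\<dots> = (\<Sum>y<n. if y = i then d i * P $$ (x, i) else 0)"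
    using diag i by (intro sum.cong) auto
  also have "\<dots> = d i * P $$ (x, i)"
    using i by simp
  finally show ?thesis .
qed

lemma left_invertible_columns_independent:
  fixes P Q :: "real mat"
  assumes P: "P \<in> carrier_mat n n" and Q: "Q \<in> carrier_mat n n" and QP: "Q * P = 1\<^sub>m n"
    and zero: "\<forall>x<n. (\<Sum>j<n. \<beta> j * P $$ (x, j)) = 0" and i: "i < n"
  shows "\<beta> i = 0"
proof -
  have QP_sum: "(\<Sum>x<n. Q $$ (i, x) * P $$ (x, j)) = (if i = j then 1 else 0)" if j: "j < n" for j
  proof -
    have "(\<Sum>x<n. Q $$ (i, x) * P $$ (x, j)) = (Q * P) $$ (i, j)"
      using P Q i j by (simp add: scalar_prod_def atLeast0LessThan)
    then show ?thesis using QP i j by simp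
  qed
  have "\<beta> i = (\<Sum>j<n. \<beta> j * (if i = j then 1 else 0))"
    using i by (simp add: if_distrib cong: if_cong)
  also have "\<dots> = (\<Sum>j<n. \<beta> j * (\<Sum>x<n. Q $$ (i, x) * P $$ (x, j)))"
    using QP_sum by simp
  also have "\<dots> = (\<Sum>j<n. \<Sum>x<n. Q $$ (i, x) * (\<beta> j * P $$ (x, j)))"
    by (simp add: sum_distrib_left mult_ac)
  also have "\<dots> = (\<Sum>x<n. Q $$ (i, x) * (\<Sum>j<n. \<beta> j * P $$ (x, j)))"
    by (subst sum.swap) (simp add: sum_distrib_left)
  also have "\<dots> = 0"
    using zero by simp
  finally show ?thesis .
qed

lemma symmetric_mat_eigenbasis:
  fixes A :: "real mat"
  assumes A: "A \<in> carrier_mat n n" and sym: "A\<^sup>T = A"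
    and cp: "char_poly A = (\<Prod>a\<leftarrow>es. [:- a, 1:])"
  obtains p d where "eigenbasis n (\<lambda>x y. A $$ (x, y)) p d" and "mset (map d [0..<n]) = mset es"
proof -
  obtain n_as where jnf: "jordan_nf A n_as"
    using jordan_nf_exists[OF A cp] by blast
  define J where "J = jordan_matrix n_as"
  have sizes: "\<forall>x\<in>set n_as. fst x = 1"
    by (rule jordan_nf_symmetric_block_sizes[OF A sym jnf])
  obtain P Q where "similar_mat_wit A J P Q"
    using jnf unfolding jordan_nf_def similar_mat_def J_def by blast
  then have PQ: "P \<in> carrier_mat n n" "Q \<in> carrier_mat n n" "J \<in> carrier_mat n n"
    "P * Q = 1\<^sub>m n" "Q * P = 1\<^sub>m n" "A = P * J * Q"
    using A unfolding similar_mat_wit_def Let_def by auto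
  note J = jordan_matrix_block_sizes_one[OF sizes, folded J_def]
  have "dim_row J = length n_as" "dim_row J = n"
    using J PQ(3) by simp_all
  then have len: "length n_as = n"
    by simp
  define d where "d i = snd (n_as ! i)" for i
  have diag: "J $$ (i, j) = (if i = j then d i else 0)" if "i < n" "j < n" for i j
    using J len that unfolding d_def by auto
  have "A * P = P * J * (Q * P)"
    using PQ by (simp add: assoc_mult_mat[of _ n n _ n _ n])
  then have AP: "A * P = P * J"
    using PQ by simp
  have "eigenbasis n (\<lambda>x y. A $$ (x, y)) (\<lambda>i x. P $$ (x, i)) d"
  proof
    show "A $$ (x, y) = A $$ (y, x)" if "x < n" "y < n" for x y
      using sym that A by (metis carrier_matD(1) carrier_matD(2) index_transpose_mat(1))
    show "(\<Sum>y<n. A $$ (x, y) * P $$ (y, i)) = d i * P $$ (x, i)" if "i < n" "x < n" for i x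
      using diagonalization_eigenvectors[OF A PQ(1,3) AP diag that] .
    show "\<beta> i = 0" if "\<forall>x<n. (\<Sum>i<n. \<beta> i * P $$ (x, i)) = 0" "i < n" for \<beta> i
      using left_invertible_columns_independent[OF PQ(1,2,5) that] .
  qed
  moreover have "map d [0..<n] = map snd n_as"
    unfolding d_def len[symmetric] by (rule nth_equalityI) auto
  then have "mset (map d [0..<n]) = mset es"
    using jordan_nf_size_one_eigenvalues[OF jnf sizes cp] by simp
  ultimately show ?thesis using that by blast
qed

section \<open>Strong nodal domains on a weighted graph\<close>

definition adj_on :: "'a set \<Rightarrow> ('a \<Rightarrow> 'a \<Rightarrow> real) \<Rightarrow> 'a \<Rightarrow> 'a \<Rightarrow> bool" where
  "adj_on V a x y \<longleftrightarrow> x \<in> V \<and> y \<in> V \<and> x \<noteq> y \<and> a x y \<noteq> 0"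

definition acyclic_on :: "'a set \<Rightarrow> ('a \<Rightarrow> 'a \<Rightarrow> real) \<Rightarrow> bool" where
  "acyclic_on V a \<longleftrightarrow> \<not> (\<exists>cs. length cs \<ge> 3 \<and> distinct cs \<and>
      (\<forall>j < length cs - 1. adj_on V a (cs ! j) (cs ! Suc j)) \<and> adj_on V a (last cs) (hd cs))"

definition symmetric_on :: "'a set \<Rightarrow> ('a \<Rightarrow> 'a \<Rightarrow> real) \<Rightarrow> bool" where
  "symmetric_on V a \<longleftrightarrow> (\<forall>x\<in>V. \<forall>y\<in>V. a x y = a y x)"

definition in_kernel :: "'a set \<Rightarrow> ('a \<Rightarrow> 'a \<Rightarrow> real) \<Rightarrow> ('a \<Rightarrow> real) \<Rightarrow> bool" where
  "in_kernel V a f \<longleftrightarrow> (\<forall>x\<in>V. (\<Sum>y\<in>V. a x y * f y) = 0)"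

definition nodal_support :: "'a set \<Rightarrow> ('a \<Rightarrow> real) \<Rightarrow> 'a set" where
  "nodal_support V f = {x\<in>V. f x \<noteq> 0}"

text \<open>For a = A - \<mu> I the condition f x * a x y * f y < 0 on an edge is the S-walk condition
  f x * \<sigma> x y * f y > 0 for the signature \<sigma> = - a / |a|, so the classes of nodal_equiv are the
  strong nodal domains.\<close>

definition nodal_edges :: "'a set \<Rightarrow> ('a \<Rightarrow> 'a \<Rightarrow> real) \<Rightarrow> ('a \<Rightarrow> real) \<Rightarrow> ('a \<times> 'a) set" where
  "nodal_edges V a f = {(x, y). adj_on V a x y \<and> f x * a x y * f y < 0}"

definition nodal_equiv :: "'a set \<Rightarrow> ('a \<Rightarrow> 'a \<Rightarrow> real) \<Rightarrow> ('a \<Rightarrow> real) \<Rightarrow> ('a \<times> 'a) set" where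
  "nodal_equiv V a f = {(x, y). x \<in> nodal_support V f \<and> y \<in> nodal_support V f \<and>
      (x, y) \<in> (nodal_edges V a f)\<^sup>*}"

definition nodal_count :: "'a set \<Rightarrow> ('a \<Rightarrow> 'a \<Rightarrow> real) \<Rightarrow> ('a \<Rightarrow> real) \<Rightarrow> nat" where
  "nodal_count V a f = card (nodal_support V f // nodal_equiv V a f)"

definition flat_zeros :: "'a set \<Rightarrow> ('a \<Rightarrow> 'a \<Rightarrow> real) \<Rightarrow> ('a \<Rightarrow> real) \<Rightarrow> 'a set" where
  "flat_zeros V a f = {x\<in>V. f x = 0 \<and> (\<forall>y. adj_on V a x y \<longrightarrow> f y = 0)}"

abbreviation nodal_bound :: "'a set \<Rightarrow> ('a \<Rightarrow> 'a \<Rightarrow> real) \<Rightarrow> ('a \<Rightarrow> real) \<Rightarrow> nat" where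
  "nodal_bound V a f \<equiv> nodal_count V a f + card (flat_zeros V a f)"

lemma adj_on_sym: "symmetric_on V a \<Longrightarrow> adj_on V a x y \<Longrightarrow> adj_on V a y x"
  unfolding symmetric_on_def adj_on_def by auto

lemma nodal_edges_sym: "symmetric_on V a \<Longrightarrow> sym (nodal_edges V a f)"
  unfolding sym_def nodal_edges_def symmetric_on_def adj_on_def by (auto simp: mult_ac)

lemma equiv_nodal_equiv: "symmetric_on V a \<Longrightarrow> equiv (nodal_support V f) (nodal_equiv V a f)"
  using sym_rtrancl[OF nodal_edges_sym, of V a f]
  unfolding equiv_def refl_on_def sym_def trans_def nodal_equiv_def by (auto intro: rtrancl_trans)

lemma adj_on_restrict:
  assumes "U \<subseteq> V" and "\<And>x y. x \<noteq> y \<Longrightarrow> a' x y = a x y"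
  shows "adj_on U a' x y \<longleftrightarrow> adj_on V a x y \<and> x \<in> U \<and> y \<in> U"
  using assms unfolding adj_on_def by auto

lemma nodal_edges_restrict:
  assumes "U \<subseteq> V" and "\<And>x y. x \<noteq> y \<Longrightarrow> a' x y = a x y"
  shows "nodal_edges U a' f = nodal_edges V a f \<inter> (U \<times> U)"
  using assms by (auto simp: nodal_edges_def adj_on_def)

lemma symmetric_on_restrict:
  assumes "U \<subseteq> V" and "\<And>x y. x \<noteq> y \<Longrightarrow> a' x y = a x y" and "symmetric_on V a"
  shows "symmetric_on U a'"
  unfolding symmetric_on_def
proof (intro ballI)
  fix x y assume "x \<in> U" "y \<in> U"
  then have "x \<in> V" "y \<in> V"
    using assms(1) by auto
  then show "a' x y = a' y x"
    using assms(2,3) unfolding symmetric_on_def by (cases "x = y") auto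
qed

lemma acyclic_on_restrict:
  assumes "U \<subseteq> V" and "\<And>x y. x \<noteq> y \<Longrightarrow> a' x y = a x y" and "acyclic_on V a"
  shows "acyclic_on U a'"
  unfolding acyclic_on_def
proof
  assume "\<exists>cs. length cs \<ge> 3 \<and> distinct cs \<and>
      (\<forall>j < length cs - 1. adj_on U a' (cs ! j) (cs ! Suc j)) \<and> adj_on U a' (last cs) (hd cs)"
  then obtain cs where cs: "length cs \<ge> 3" "distinct cs"
    "\<forall>j < length cs - 1. adj_on U a' (cs ! j) (cs ! Suc j)" "adj_on U a' (last cs) (hd cs)"
    by blast
  then have "\<forall>j < length cs - 1. adj_on V a (cs ! j) (cs ! Suc j)" "adj_on V a (last cs) (hd cs)"
    using adj_on_restrict[OF assms(1,2)] by auto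
  with cs(1,2) assms(3) show False
    unfolding acyclic_on_def by blast
qed

lemma card_quotient_restrict:
  assumes eA: "equiv A r" and eB: "equiv B r'" and AB: "A \<subseteq> B"
    and agree: "\<And>x y. x \<in> A \<Longrightarrow> y \<in> A \<Longrightarrow> (x, y) \<in> r \<longleftrightarrow> (x, y) \<in> r'"
  shows "card (A // r) = card ((\<lambda>x. r' `` {x}) ` A)"
proof -
  have image_class: "r' `` (r `` {x}) = r' `` {x}" if x: "x \<in> A" for x
  proof
    show "r' `` (r `` {x}) \<subseteq> r' `` {x}"
    proof
      fix z assume "z \<in> r' `` (r `` {x})"
      then obtain y where xy: "(x, y) \<in> r" and yz: "(y, z) \<in> r'" by auto
      have "y \<in> A" using xy eA unfolding equiv_def refl_on_def by blast
      then have "(x, y) \<in> r'" using agree x xy by blast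
      with yz eB show "z \<in> r' `` {x}" unfolding equiv_def trans_def by blast
    qed
    show "r' `` {x} \<subseteq> r' `` (r `` {x})"
      using x eA unfolding equiv_def refl_on_def by blast
  qed
  have quot: "A // r = (\<lambda>x. r `` {x}) ` A"
    unfolding quotient_def by auto
  have "inj_on (\<lambda>X. r' `` X) (A // r)"
  proof (rule inj_onI)
    fix X Y assume "X \<in> A // r" "Y \<in> A // r" "r' `` X = r' `` Y"
    then obtain x y where xy: "x \<in> A" "y \<in> A" "X = r `` {x}" "Y = r `` {y}" "r' `` {x} = r' `` {y}"
      unfolding quot using image_class by auto
    then have "(x, y) \<in> r'" using eq_equiv_class_iff[OF eB] AB by blast
    then have "(x, y) \<in> r" using agree xy by blast
    then show "X = Y" using xy equiv_class_eq[OF eA] by simp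
  qed
  moreover have "(\<lambda>X. r' `` X) ` (A // r) = (\<lambda>x. r' `` {x}) ` A"
    unfolding quot image_image using image_class by (simp cong: image_cong)
  ultimately show ?thesis using card_image by fastforce
qed

lemma nodal_count_restrict:
  assumes UV: "U \<subseteq> V" and od: "\<And>x y. x \<noteq> y \<Longrightarrow> a' x y = a x y"
    and s: "symmetric_on V a" and fin: "finite V"
    and path: "\<And>x y. x \<in> U \<Longrightarrow> y \<in> U \<Longrightarrow> (x, y) \<in> (nodal_edges V a f)\<^sup>* \<Longrightarrow>
      (x, y) \<in> (nodal_edges U a' f)\<^sup>*"
  shows "nodal_count U a' f \<le> nodal_count V a f"
    and "v \<in> nodal_support V f \<Longrightarrow> v \<notin> U \<Longrightarrow> (\<forall>y. (v, y) \<notin> nodal_edges V a f) \<Longrightarrow>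
      nodal_count U a' f < nodal_count V a f"
proof -
  let ?A = "nodal_support U f" and ?B = "nodal_support V f" and ?r' = "nodal_equiv V a f"
  have eB: "equiv ?B ?r'" by (rule equiv_nodal_equiv[OF s])
  have AB: "?A \<subseteq> ?B" using UV unfolding nodal_support_def by auto
  have "(nodal_edges U a' f)\<^sup>* \<subseteq> (nodal_edges V a f)\<^sup>*"
    using nodal_edges_restrict[of U V a' a, OF UV od] by (intro rtrancl_mono) auto
  then have agree: "(x, y) \<in> nodal_equiv U a' f \<longleftrightarrow> (x, y) \<in> ?r'" if "x \<in> ?A" "y \<in> ?A" for x y
    using that AB path unfolding nodal_equiv_def nodal_support_def by auto
  have count: "nodal_count U a' f = card ((\<lambda>x. ?r' `` {x}) ` ?A)"
    unfolding nodal_count_def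
    by (rule card_quotient_restrict[OF equiv_nodal_equiv[OF symmetric_on_restrict[of U V a' a, OF UV od s]]
          eB AB agree])
  have sub: "(\<lambda>x. ?r' `` {x}) ` ?A \<subseteq> ?B // ?r'"
    using AB unfolding quotient_def by auto
  have finB: "finite (?B // ?r')"
    using fin eB by (simp add: equiv_def refl_on_def finite_quotient nodal_support_def)
  show "nodal_count U a' f \<le> nodal_count V a f"
    unfolding count using card_mono[OF finB sub] by (simp add: nodal_count_def)
  assume v: "v \<in> ?B" "v \<notin> U" and isolated: "\<forall>y. (v, y) \<notin> nodal_edges V a f"
  have "?r' `` {v} \<notin> (\<lambda>x. ?r' `` {x}) ` ?A"
  proof
    assume "?r' `` {v} \<in> (\<lambda>x. ?r' `` {x}) ` ?A"
    then obtain x where x: "x \<in> ?A" "?r' `` {v} = ?r' `` {x}" by auto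
    then have "(v, x) \<in> (nodal_edges V a f)\<^sup>*"
      using eq_equiv_class_iff[OF eB] v AB unfolding nodal_equiv_def by blast
    then have "x = v" using isolated by (auto elim: converse_rtranclE)
    with x v show False unfolding nodal_support_def by auto
  qed
  moreover have "?r' `` {v} \<in> ?B // ?r'"
    using v(1) by (rule quotientI)
  ultimately have "(\<lambda>x. ?r' `` {x}) ` ?A \<subset> ?B // ?r'"
    using sub by blast
  then show "nodal_count U a' f < nodal_count V a f"
    unfolding count using psubset_card_mono[OF finB] by (simp add: nodal_count_def)
qed

lemma flat_zeros_restrict:
  assumes UV: "U \<subseteq> V" and od: "\<And>x y. x \<noteq> y \<Longrightarrow> a' x y = a x y"
    and border: "\<And>x y. x \<in> U \<Longrightarrow> y \<in> V - U \<Longrightarrow> adj_on V a x y \<Longrightarrow> f x = 0 \<Longrightarrow> f y = 0"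
  shows "flat_zeros U a' f \<subseteq> flat_zeros V a f \<inter> U"
proof
  fix x assume x: "x \<in> flat_zeros U a' f"
  then have xU: "x \<in> U" and fx: "f x = 0" and flat: "\<And>y. adj_on U a' x y \<Longrightarrow> f y = 0"
    unfolding flat_zeros_def by auto
  have "f y = 0" if y: "adj_on V a x y" for y
  proof (cases "y \<in> U")
    case True
    then show ?thesis using flat adj_on_restrict[of U V a' a, OF UV od] xU y by blast
  next
    case False
    then show ?thesis using border[OF xU _ y fx] y unfolding adj_on_def by blast
  qed
  then show "x \<in> flat_zeros V a f \<inter> U"
    using xU UV fx unfolding flat_zeros_def by auto
qed

text \<open>The combinatorial half of the leaf-removal induction: S(f) + |F| does not grow when vertices
  are deleted without cutting nodal paths, and drops when a deleted vertex is a nodal domain of its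
  own or a flat zero.\<close>

lemma nodal_bound_restrict:
  assumes UV: "U \<subseteq> V" and od: "\<And>x y. x \<noteq> y \<Longrightarrow> a' x y = a x y"
    and s: "symmetric_on V a" and fin: "finite V"
    and path: "\<And>x y. x \<in> U \<Longrightarrow> y \<in> U \<Longrightarrow> (x, y) \<in> (nodal_edges V a f)\<^sup>* \<Longrightarrow>
      (x, y) \<in> (nodal_edges U a' f)\<^sup>*"
    and border: "\<And>x y. x \<in> U \<Longrightarrow> y \<in> V - U \<Longrightarrow> adj_on V a x y \<Longrightarrow> f x = 0 \<Longrightarrow> f y = 0"
  shows "nodal_bound U a' f \<le> nodal_bound V a f"
    and "v \<in> V - U \<Longrightarrow> v \<in> flat_zeros V a f \<or> (f v \<noteq> 0 \<and> (\<forall>y. (v, y) \<notin> nodal_edges V a f)) \<Longrightarrow>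
      nodal_bound U a' f < nodal_bound V a f"
proof -
  note count = nodal_count_restrict[OF UV od s fin path]
  have sub: "flat_zeros U a' f \<subseteq> flat_zeros V a f \<inter> U"
    by (rule flat_zeros_restrict[OF UV od border])
  have finF: "finite (flat_zeros V a f)"
    using fin unfolding flat_zeros_def by auto
  have "card (flat_zeros U a' f) \<le> card (flat_zeros V a f)"
    using sub finF by (intro card_mono) auto
  then show "nodal_bound U a' f \<le> nodal_bound V a f"
    using count(1) by simp
  assume v: "v \<in> V - U"
    and gain: "v \<in> flat_zeros V a f \<or> (f v \<noteq> 0 \<and> (\<forall>y. (v, y) \<notin> nodal_edges V a f))"
  then show "nodal_bound U a' f < nodal_bound V a f"
  proof (elim disjE)
    assume "v \<in> flat_zeros V a f"
    then have "flat_zeros U a' f \<subset> flat_zeros V a f"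
      using sub v by blast
    then have "card (flat_zeros U a' f) < card (flat_zeros V a f)"
      by (rule psubset_card_mono[OF finF])
    then show ?thesis
      using count(1) by linarith
  next
    assume "f v \<noteq> 0 \<and> (\<forall>y. (v, y) \<notin> nodal_edges V a f)"
    then have "nodal_count U a' f < nodal_count V a f"
      using count(2)[of v] v unfolding nodal_support_def by blast
    then show ?thesis
      using \<open>card (flat_zeros U a' f) \<le> card (flat_zeros V a f)\<close> by simp
  qed
qed

lemma rtrancl_avoid_pendant:
  assumes E: "E \<subseteq> E' \<union> {(v, w), (w, v)}" and E': "E' \<subseteq> U \<times> U"
    and vU: "v \<notin> U" and vw: "v \<noteq> w" and x: "x \<in> U" and xz: "(x, z) \<in> E\<^sup>*"
  shows "(z \<noteq> v \<longrightarrow> (x, z) \<in> E'\<^sup>*) \<and> (z = v \<longrightarrow> (x, w) \<in> E'\<^sup>*)"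
  using xz
proof (induction rule: rtrancl_induct)
  case base
  then show ?case using x vU by auto
next
  case (step y z)
  from step.hyps(2) E have "(y, z) \<in> E' \<or> (y, z) = (v, w) \<or> (y, z) = (w, v)"
    by auto
  then show ?case
  proof (elim disjE)
    assume yz: "(y, z) \<in> E'"
    then have "y \<noteq> v" "z \<noteq> v" using E' vU by auto
    then show ?case using step.IH yz by (auto intro: rtrancl_into_rtrancl)
  qed (use step.IH vw in auto)
qed

definition path_on :: "'a set \<Rightarrow> ('a \<Rightarrow> 'a \<Rightarrow> real) \<Rightarrow> 'a list \<Rightarrow> bool" where
  "path_on V a ps \<longleftrightarrow> set ps \<subseteq> V \<and> distinct ps \<and> ps \<noteq> [] \<and>
     (\<forall>j < length ps - 1. adj_on V a (ps ! j) (ps ! Suc j))"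

lemma path_on_snoc:
  assumes ps: "path_on V a ps" and z: "adj_on V a (last ps) z" and "z \<notin> set ps"
  shows "path_on V a (ps @ [z])"
  unfolding path_on_def
proof (intro conjI allI impI)
  show "set (ps @ [z]) \<subseteq> V" "distinct (ps @ [z])" "ps @ [z] \<noteq> []"
    using assms unfolding path_on_def adj_on_def by auto
  fix j assume j: "j < length (ps @ [z]) - 1"
  show "adj_on V a ((ps @ [z]) ! j) ((ps @ [z]) ! Suc j)"
  proof (cases "j < length ps - 1")
    case True
    then have "Suc j < length ps" by simp
    then show ?thesis using ps True unfolding path_on_def by (simp add: nth_append)
  next
    case False
    then have "j = length ps - 1" "ps \<noteq> []" using j ps unfolding path_on_def by auto
    then show ?thesis using z by (simp add: nth_append last_conv_nth)
  qed
qed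

lemma acyclic_on_path_last_neighbour:
  assumes acyc: "acyclic_on V a" and ps: "path_on V a ps"
    and z: "adj_on V a (last ps) z" and "z \<in> set ps"
  shows "z = ps ! (length ps - 2)"
proof -
  obtain i where i: "i < length ps" "z = ps ! i"
    using \<open>z \<in> set ps\<close> by (auto simp: in_set_conv_nth)
  have "last ps = ps ! (length ps - 1)"
    using ps unfolding path_on_def by (simp add: last_conv_nth)
  then have "i \<noteq> length ps - 1" using i z unfolding adj_on_def by auto
  moreover have "\<not> i + 3 \<le> length ps"
  proof
    \<comment> \<open>Otherwise the path from z back to last ps closes a cycle.\<close>
    assume i3: "i + 3 \<le> length ps"
    define cs where "cs = drop i ps"
    have "\<forall>j < length cs - 1. adj_on V a (cs ! j) (cs ! Suc j)"
      using ps i unfolding cs_def path_on_def by simp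
    moreover have "adj_on V a (last cs) (hd cs)"
      using z i unfolding cs_def by (simp add: hd_drop_conv_nth)
    moreover have "length cs \<ge> 3" "distinct cs"
      using i3 ps unfolding cs_def path_on_def by simp_all
    ultimately show False
      using acyc unfolding acyclic_on_def by blast
  qed
  ultimately have "i = length ps - 2"
    using i(1) by linarith
  then show ?thesis
    using i(2) by simp
qed

lemma acyclic_on_leaf:
  assumes fin: "finite V" and ne: "V \<noteq> {}" and acyc: "acyclic_on V a"
  obtains v where "v \<in> V" and "\<And>y y'. adj_on V a v y \<Longrightarrow> adj_on V a v y' \<Longrightarrow> y = y'"
proof -
  \<comment> \<open>The end of a longest path has all its neighbours on the path, hence only its predecessor.\<close>
  let ?P = "{ps. path_on V a ps}"
  have finP: "finite ?P"
    by (rule finite_subset[OF _ finite_subset_distinct[OF fin]]) (auto simp: path_on_def)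
  obtain v0 where "v0 \<in> V" using ne by auto
  then have "[v0] \<in> ?P" unfolding path_on_def by auto
  then have "Max (length ` ?P) \<in> length ` ?P"
    using finP by (intro Max_in) auto
  then obtain ps where ps: "path_on V a ps" and "length ps = Max (length ` ?P)"
    by auto
  then have longest: "length qs \<le> length ps" if "path_on V a qs" for qs
    using finP that by simp
  have "y = ps ! (length ps - 2)" if y: "adj_on V a (last ps) y" for y
  proof (rule acyclic_on_path_last_neighbour[OF acyc ps y])
    show "y \<in> set ps"
      using longest[OF path_on_snoc[OF ps y]] by fastforce
  qed
  moreover have "last ps \<in> V" using ps unfolding path_on_def by auto
  ultimately show ?thesis using that by metis
qed

section \<open>Leaf elimination and the lower bound\<close>

lemma qform_remove:
  assumes fin: "finite V" and v: "v \<in> V" and s: "symmetric_on V a"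
  shows "qform V a h = qform (V - {v}) a h + 2 * h v * (\<Sum>y\<in>V - {v}. a v y * h y) + a v v * h v * h v"
proof -
  let ?V' = "V - {v}"
  have split: "\<And>g. (\<Sum>x\<in>V. g x) = g v + (\<Sum>x\<in>?V'. g x)"
    using fin v by (simp add: sum.remove)
  have "qform V a h = (\<Sum>y\<in>V. h v * a v y * h y) + (\<Sum>x\<in>?V'. \<Sum>y\<in>V. h x * a x y * h y)"
    unfolding qform_def by (rule split)
  also have "(\<Sum>y\<in>V. h v * a v y * h y) = h v * a v v * h v + (\<Sum>y\<in>?V'. h v * a v y * h y)"
    by (rule split)
  also have "(\<Sum>x\<in>?V'. \<Sum>y\<in>V. h x * a x y * h y)
      = (\<Sum>x\<in>?V'. h x * a x v * h v) + qform ?V' a h"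
    unfolding qform_def split by (simp add: sum.distrib)
  also have "(\<Sum>x\<in>?V'. h x * a x v * h v) = (\<Sum>x\<in>?V'. h v * a v x * h x)"
    using s v unfolding symmetric_on_def by (intro sum.cong) (auto simp: mult_ac)
  finally show ?thesis
    by (simp add: sum_distrib_left mult_ac)
qed

lemma qform_zero: "\<forall>x\<in>V. h x = 0 \<Longrightarrow> qform V a h = 0"
  unfolding qform_def by simp

lemma qform_diff_diag:
  assumes fin: "finite V" and w: "w \<in> V"
  shows "qform V (\<lambda>x y. a x y - (if x = w \<and> y = w then \<delta> else 0)) h = qform V a h - \<delta> * h w * h w"
proof -
  have "(\<Sum>y\<in>V. h x * (if x = w \<and> y = w then \<delta> else 0) * h y) = (if x = w then h w * \<delta> * h w else 0)"
    for x
  proof -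
    have "(\<Sum>y\<in>V. h x * (if x = w \<and> y = w then \<delta> else 0) * h y)
        = (\<Sum>y\<in>V. if y = w then (if x = w then h w * \<delta> * h w else 0) else 0)"
      by (intro sum.cong) auto
    also have "\<dots> = (if x = w then h w * \<delta> * h w else 0)"
      using fin w by (simp add: sum.delta')
    finally show ?thesis .
  qed
  then have "(\<Sum>x\<in>V. \<Sum>y\<in>V. h x * (if x = w \<and> y = w then \<delta> else 0) * h y) = \<delta> * h w * h w"
    using fin w by (simp add: sum.delta' mult_ac)
  then show ?thesis
    unfolding qform_def by (simp add: algebra_simps sum_subtractf)
qed

text \<open>Eliminating a pendant vertex v with neighbour w (a v v \<noteq> 0) by a Schur complement only
  changes the diagonal entry at w.\<close>

definition schur_pendant :: "('a \<Rightarrow> 'a \<Rightarrow> real) \<Rightarrow> 'a \<Rightarrow> 'a \<Rightarrow> 'a \<Rightarrow> 'a \<Rightarrow> real" where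
  "schur_pendant a v w x y = a x y - (if x = w \<and> y = w then a v w * a v w / a v v else 0)"

lemma qform_schur_pendant:
  assumes fin: "finite V" and v: "v \<in> V" and w: "w \<in> V" and vw: "v \<noteq> w" and s: "symmetric_on V a"
    and avv: "a v v \<noteq> 0" and only: "\<And>y. y \<in> V \<Longrightarrow> y \<noteq> v \<Longrightarrow> y \<noteq> w \<Longrightarrow> a v y = 0"
  shows "qform V a h
    = qform (V - {v}) (schur_pendant a v w) h + a v v * (h v + a v w * h w / a v v)\<^sup>2"
proof -
  let ?V' = "V - {v}" and ?\<delta> = "a v w * a v w / a v v"
  have w': "w \<in> ?V'" using w vw by auto
  have "(\<Sum>y\<in>?V'. a v y * h y) = (\<Sum>y\<in>?V'. if y = w then a v w * h w else 0)"
    using only by (intro sum.cong) auto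
  then have row: "(\<Sum>y\<in>?V'. a v y * h y) = a v w * h w"
    using fin w' by simp
  have diag: "qform ?V' (schur_pendant a v w) h = qform ?V' a h - ?\<delta> * h w * h w"
    unfolding schur_pendant_def using qform_diff_diag[of ?V' w] fin w' by simp
  have "a v v * (h v + a v w * h w / a v v)\<^sup>2
      = a v v * h v * h v + 2 * h v * (a v w * h w) + ?\<delta> * h w * h w"
    using avv by (simp add: field_simps power2_eq_square)
  then show ?thesis
    unfolding qform_remove[OF fin v s, of h] row diag by (simp add: algebra_simps)
qed

text \<open>qform_pos_codim V a k: the quadratic form of a is positive definite on a subspace of
  codimension at most k, i.e. a has at most k nonpositive eigenvalues.\<close>

definition qform_pos_codim :: "'a set \<Rightarrow> ('a \<Rightarrow> 'a \<Rightarrow> real) \<Rightarrow> nat \<Rightarrow> bool" where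
  "qform_pos_codim V a k \<longleftrightarrow> (\<exists>L. length L \<le> k \<and> (\<forall>h. (\<forall>l\<in>set L. (\<Sum>x\<in>V. l x * h x) = 0) \<longrightarrow>
      (\<exists>x\<in>V. h x \<noteq> 0) \<longrightarrow> 0 < qform V a h))"

lemma qform_pos_codim_mono: "qform_pos_codim V a k \<Longrightarrow> k \<le> k' \<Longrightarrow> qform_pos_codim V a k'"
  unfolding qform_pos_codim_def by (meson order_trans)

lemma qform_pos_codim_empty: "qform_pos_codim {} a k"
  unfolding qform_pos_codim_def by (intro exI[of _ "[]"]) auto

lemma qform_pos_codim_insert:
  fixes M :: "('a \<Rightarrow> real) list"
  assumes fin: "finite V" and UV: "U \<subseteq> V" and pos: "qform_pos_codim U a' k"
    and step: "\<And>h. \<forall>l\<in>set M. (\<Sum>x\<in>V. l x * h x) = 0 \<Longrightarrow> \<exists>x\<in>V. h x \<noteq> 0 \<Longrightarrow>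
      ((\<exists>x\<in>U. h x \<noteq> 0) \<Longrightarrow> 0 < qform U a' h) \<Longrightarrow> 0 < qform V a h"
  shows "qform_pos_codim V a (k + length M)"
proof -
  obtain L where L: "length L \<le> k" "\<And>h. \<forall>l\<in>set L. (\<Sum>x\<in>U. l x * h x) = 0 \<Longrightarrow>
      \<exists>x\<in>U. h x \<noteq> 0 \<Longrightarrow> 0 < qform U a' h"
    using pos unfolding qform_pos_codim_def by blast
  define ext where "ext l x = (if x \<in> U then l x else 0)" for l :: "'a \<Rightarrow> real" and x
  have sum_ext: "(\<Sum>x\<in>V. ext l x * h x) = (\<Sum>x\<in>U. l x * h x)" for l h :: "'a \<Rightarrow> real"
  proof -
    have "(\<Sum>x\<in>V. ext l x * h x) = (\<Sum>x\<in>V. if x \<in> U then l x * h x else 0)"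
      unfolding ext_def by (intro sum.cong) auto
    also have "\<dots> = (\<Sum>x\<in>V \<inter> U. l x * h x)"
      using fin by (simp add: sum.inter_restrict)
    finally show ?thesis
      using UV by (simp add: Int_absorb1)
  qed
  show ?thesis
    unfolding qform_pos_codim_def
  proof (intro exI[of _ "M @ map ext L"] conjI allI impI)
    show "length (M @ map ext L) \<le> k + length M"
      using L(1) by simp
    fix h assume h: "\<forall>l\<in>set (M @ map ext L). (\<Sum>x\<in>V. l x * h x) = 0" and nz: "\<exists>x\<in>V. h x \<noteq> 0"
    have "\<forall>l\<in>set L. (\<Sum>x\<in>U. l x * h x) = 0"
    proof
      fix l assume "l \<in> set L"
      then have "(\<Sum>x\<in>V. ext l x * h x) = 0" using h by simp
      then show "(\<Sum>x\<in>U. l x * h x) = 0" using sum_ext by simp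
    qed
    then have "(\<exists>x\<in>U. h x \<noteq> 0) \<Longrightarrow> 0 < qform U a' h"
      using L(2) by blast
    then show "0 < qform V a h"
      using step h nz by auto
  qed
qed

lemma qform_pos_codim_insert_isolated:
  assumes fin: "finite V" and v: "v \<in> V" and s: "symmetric_on V a"
    and iso: "\<And>y. y \<in> V \<Longrightarrow> y \<noteq> v \<Longrightarrow> a v y = 0"
    and pos: "qform_pos_codim (V - {v}) a k"
  shows "qform_pos_codim V a (k + 1)"
proof -
  define l0 where "l0 x = (if x = v then 1 else 0 :: real)" for x
  have l0h: "(\<Sum>x\<in>V. l0 x * h x) = h v" for h
    using fin v unfolding l0_def by (simp add: if_distrib[of "\<lambda>t. t * h _"] sum.delta' cong: if_cong)
  have "qform_pos_codim V a (k + length [l0])"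
  proof (rule qform_pos_codim_insert[OF fin _ pos])
    fix h assume "\<forall>l\<in>set [l0]. (\<Sum>x\<in>V. l x * h x) = 0" and "\<exists>x\<in>V. h x \<noteq> 0"
      and pos_h: "(\<exists>x\<in>V - {v}. h x \<noteq> 0) \<Longrightarrow> 0 < qform (V - {v}) a h"
    then have "h v = 0" "0 < qform (V - {v}) a h"
      using l0h by auto
    then show "0 < qform V a h"
      using qform_remove[OF fin v s, of h] by simp
  qed auto
  then show ?thesis by simp
qed

lemma qform_pos_codim_insert_pendant_pos:
  assumes fin: "finite V" and v: "v \<in> V" and w: "w \<in> V" and vw: "v \<noteq> w" and s: "symmetric_on V a"
    and avv: "0 < a v v" and only: "\<And>y. y \<in> V \<Longrightarrow> y \<noteq> v \<Longrightarrow> y \<noteq> w \<Longrightarrow> a v y = 0"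
    and pos: "qform_pos_codim (V - {v}) (schur_pendant a v w) k"
  shows "qform_pos_codim V a k"
proof -
  let ?V' = "V - {v}" and ?a' = "schur_pendant a v w"
  have "qform_pos_codim V a (k + length ([] :: ('a \<Rightarrow> real) list))"
  proof (rule qform_pos_codim_insert[OF fin _ pos])
    fix h assume nz: "\<exists>x\<in>V. h x \<noteq> 0" and pos_h: "(\<exists>x\<in>?V'. h x \<noteq> 0) \<Longrightarrow> 0 < qform ?V' ?a' h"
    have Q: "qform V a h = qform ?V' ?a' h + a v v * (h v + a v w * h w / a v v)\<^sup>2"
      using avv by (intro qform_schur_pendant[OF fin v w vw s _ only]) simp
    show "0 < qform V a h"
    proof (cases "\<exists>x\<in>?V'. h x \<noteq> 0")
      case True
      then show ?thesis
        unfolding Q using pos_h avv by (simp add: add_pos_nonneg)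
    next
      case False
      then have "h v \<noteq> 0" "h w = 0" "qform ?V' ?a' h = 0"
        using nz w vw by (auto intro: qform_zero)
      then show ?thesis
        unfolding Q using avv by simp
    qed
  qed auto
  then show ?thesis by simp
qed

lemma qform_pos_codim_insert_pendant_neg:
  assumes fin: "finite V" and v: "v \<in> V" and w: "w \<in> V" and vw: "v \<noteq> w" and s: "symmetric_on V a"
    and avv: "a v v < 0" and only: "\<And>y. y \<in> V \<Longrightarrow> y \<noteq> v \<Longrightarrow> y \<noteq> w \<Longrightarrow> a v y = 0"
    and pos: "qform_pos_codim (V - {v}) (schur_pendant a v w) k"
  shows "qform_pos_codim V a (k + 1)"
proof -
  let ?V' = "V - {v}" and ?a' = "schur_pendant a v w"
  \<comment> \<open>The extra constraint kills the negative square.\<close>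
  define l0 where "l0 x = (if x = v then 1 else if x = w then a v w / a v v else 0)" for x
  have l0h: "(\<Sum>x\<in>V. l0 x * h x) = h v + a v w * h w / a v v" for h
  proof -
    have "(\<Sum>x\<in>V. l0 x * h x)
        = (\<Sum>x\<in>V. (if x = v then h v else 0) + (if x = w then a v w / a v v * h w else 0))"
      using vw unfolding l0_def by (intro sum.cong) auto
    then show ?thesis
      using fin v w by (simp add: sum.distrib)
  qed
  have "qform_pos_codim V a (k + length [l0])"
  proof (rule qform_pos_codim_insert[OF fin _ pos])
    fix h assume "\<forall>l\<in>set [l0]. (\<Sum>x\<in>V. l x * h x) = 0" and nz: "\<exists>x\<in>V. h x \<noteq> 0"
      and pos_h: "(\<exists>x\<in>?V'. h x \<noteq> 0) \<Longrightarrow> 0 < qform ?V' ?a' h"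
    then have sq0: "h v + a v w * h w / a v v = 0"
      using l0h by simp
    have "\<exists>x\<in>?V'. h x \<noteq> 0"
    proof (rule ccontr)
      assume "\<not> (\<exists>x\<in>?V'. h x \<noteq> 0)"
      then have "\<forall>x\<in>?V'. h x = 0" "h w = 0" using w vw by auto
      with sq0 nz show False by auto
    qed
    moreover have "qform V a h = qform ?V' ?a' h + a v v * (h v + a v w * h w / a v v)\<^sup>2"
      using avv by (intro qform_schur_pendant[OF fin v w vw s _ only]) simp
    ultimately show "0 < qform V a h"
      using pos_h unfolding sq0 by simp
  qed auto
  then show ?thesis by simp
qed

lemma qform_pendant_zero:
  assumes fin: "finite V" and v: "v \<in> V" and w: "w \<in> V" and vw: "v \<noteq> w" and s: "symmetric_on V a"
    and avv: "a v v = 0" and only: "\<And>y. y \<in> V \<Longrightarrow> y \<noteq> v \<Longrightarrow> y \<noteq> w \<Longrightarrow> a v y = 0"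
  shows "qform V a h = qform (V - {v} - {w}) a h
    + h w * (2 * a v w * h v + a w w * h w + 2 * (\<Sum>y\<in>V - {v} - {w}. a w y * h y))"
proof -
  have w1: "w \<in> V - {v}" using w vw by auto
  have s1: "symmetric_on (V - {v}) a" using s unfolding symmetric_on_def by auto
  have "(\<Sum>y\<in>V - {v}. a v y * h y) = (\<Sum>y\<in>V - {v}. if y = w then a v w * h w else 0)"
    using only by (intro sum.cong) auto
  then have "(\<Sum>y\<in>V - {v}. a v y * h y) = a v w * h w"
    using fin w1 by simp
  then show ?thesis
    using qform_remove[OF fin v s, of h] qform_remove[OF _ w1 s1, of h] fin avv
    by (simp add: algebra_simps)
qed

lemma qform_pos_codim_insert_pendant_zero:
  assumes fin: "finite V" and v: "v \<in> V" and w: "w \<in> V" and vw: "v \<noteq> w" and s: "symmetric_on V a"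
    and avv: "a v v = 0" and avw: "a v w \<noteq> 0"
    and only: "\<And>y. y \<in> V \<Longrightarrow> y \<noteq> v \<Longrightarrow> y \<noteq> w \<Longrightarrow> a v y = 0"
    and pos: "qform_pos_codim (V - {v} - {w}) a k"
  shows "qform_pos_codim V a (k + 1)"
proof -
  let ?U = "V - {v} - {w}"
  define t where "t h = 2 * a v w * h v + a w w * h w + 2 * (\<Sum>y\<in>?U. a w y * h y)" for h
  \<comment> \<open>On the plane spanned by v and w the form is 2 a_vw h_v h_w + a_ww h_w^2, a hyperbolic plane:
    the constraint t h = h w turns the remaining cross term into the positive square h_w^2.\<close>
  define l0 where "l0 x = (if x = v then 2 * a v w else if x = w then a w w - 1 else 2 * a w x)" for x
  have l0h: "(\<Sum>x\<in>V. l0 x * h x) = t h - h w" for h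
  proof -
    have "(\<Sum>x\<in>V. l0 x * h x) = l0 v * h v + (\<Sum>x\<in>V - {v}. l0 x * h x)"
      using fin v by (rule sum.remove)
    also have "(\<Sum>x\<in>V - {v}. l0 x * h x) = l0 w * h w + (\<Sum>x\<in>?U. l0 x * h x)"
      by (rule sum.remove) (use fin w vw in auto)
    also have "(\<Sum>x\<in>?U. l0 x * h x) = (\<Sum>x\<in>?U. 2 * (a w x * h x))"
      unfolding l0_def by (intro sum.cong) auto
    finally show ?thesis
      unfolding t_def l0_def using vw by (simp add: sum_distrib_left algebra_simps)
  qed
  have "qform_pos_codim V a (k + length [l0])"
  proof (rule qform_pos_codim_insert[OF fin _ pos])
    fix h assume "\<forall>l\<in>set [l0]. (\<Sum>x\<in>V. l x * h x) = 0" and nz: "\<exists>x\<in>V. h x \<noteq> 0"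
      and pos_h: "(\<exists>x\<in>?U. h x \<noteq> 0) \<Longrightarrow> 0 < qform ?U a h"
    then have th: "t h = h w"
      using l0h by simp
    have Q: "qform V a h = qform ?U a h + h w * h w"
      using qform_pendant_zero[OF fin v w vw s avv only, of h] th unfolding t_def by simp
    show "0 < qform V a h"
    proof (cases "\<exists>x\<in>?U. h x \<noteq> 0")
      case True
      then show ?thesis unfolding Q using pos_h by (simp add: add_pos_nonneg)
    next
      case False
      have "h w \<noteq> 0"
      proof
        assume hw: "h w = 0"
        with False th have "h v = 0" using avw unfolding t_def by simp
        with False hw nz show False by auto
      qed
      then have "0 < h w * h w"
        by (metis not_real_square_gt_zero)
      then show ?thesis
        unfolding Q using False by (simp add: qform_zero)
    qed
  qed auto
  then show ?thesis by simp
qed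

lemma in_kernel_pendant_row:
  fixes a :: "'a \<Rightarrow> 'a \<Rightarrow> real"
  assumes fin: "finite V" and v: "v \<in> V" and w: "w \<in> V" and vw: "v \<noteq> w"
    and only: "\<And>y. y \<in> V \<Longrightarrow> y \<noteq> v \<Longrightarrow> y \<noteq> w \<Longrightarrow> a v y = 0" and ker: "in_kernel V a f"
  shows "a v v * f v + a v w * f w = 0"
proof -
  have "(\<Sum>y\<in>V. a v y * f y)
      = (\<Sum>y\<in>V. (if y = v then a v v * f v else 0) + (if y = w then a v w * f w else 0))"
    using only vw by (intro sum.cong) auto
  also have "\<dots> = a v v * f v + a v w * f w"
    using fin v w by (simp add: sum.distrib)
  finally show ?thesis
    using ker v unfolding in_kernel_def by simp
qed

lemma in_kernel_diff:
  assumes fin: "finite V" and ker: "in_kernel V a f" and W: "W \<subseteq> V"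
    and zero: "\<And>x y. x \<in> V - W \<Longrightarrow> y \<in> W \<Longrightarrow> a x y * f y = 0"
  shows "in_kernel (V - W) a f"
  unfolding in_kernel_def
proof
  fix x assume x: "x \<in> V - W"
  have "(\<Sum>y\<in>V. a x y * f y) = (\<Sum>y\<in>V - W. a x y * f y) + (\<Sum>y\<in>W. a x y * f y)"
    using fin W by (metis add.commute sum.subset_diff)
  also have "(\<Sum>y\<in>W. a x y * f y) = 0"
    using zero x by simp
  finally show "(\<Sum>y\<in>V - W. a x y * f y) = 0"
    using ker x unfolding in_kernel_def by simp
qed

lemma schur_pendant_off_diag: "x \<noteq> y \<Longrightarrow> schur_pendant a v w x y = a x y"
  unfolding schur_pendant_def by auto

lemma in_kernel_schur_pendant:
  assumes fin: "finite V" and v: "v \<in> V" and w: "w \<in> V" and vw: "v \<noteq> w" and s: "symmetric_on V a"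
    and avv: "a v v \<noteq> 0" and only: "\<And>y. y \<in> V \<Longrightarrow> y \<noteq> v \<Longrightarrow> y \<noteq> w \<Longrightarrow> a v y = 0"
    and ker: "in_kernel V a f"
  shows "in_kernel (V - {v}) (schur_pendant a v w) f"
  unfolding in_kernel_def
proof
  let ?V' = "V - {v}" and ?\<delta> = "a v w * a v w / a v v"
  fix x assume x: "x \<in> ?V'"
  have w': "w \<in> ?V'" using w vw by simp
  have fv: "a v v * f v + a v w * f w = 0"
    by (rule in_kernel_pendant_row[OF fin v w vw only ker])
  have "(\<Sum>y\<in>V. a x y * f y) = a x v * f v + (\<Sum>y\<in>?V'. a x y * f y)"
    using fin v by (simp add: sum.remove)
  then have row: "(\<Sum>y\<in>?V'. a x y * f y) = - (a x v * f v)"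
    using ker x unfolding in_kernel_def by simp
  have "(\<Sum>y\<in>?V'. (if x = w \<and> y = w then ?\<delta> else 0) * f y) = (if x = w then ?\<delta> * f w else 0)"
    using fin w' by (simp add: if_distrib[of "\<lambda>t. t * f _"] sum.delta' cong: if_cong)
  then have "(\<Sum>y\<in>?V'. schur_pendant a v w x y * f y)
      = - (a x v * f v) - (if x = w then ?\<delta> * f w else 0)"
    unfolding schur_pendant_def using row by (simp add: left_diff_distrib sum_subtractf)
  also have "\<dots> = 0"
  proof (cases "x = w")
    case True
    have "a w v = a v w" using s v w unfolding symmetric_on_def by auto
    then have "- (a x v * f v) - ?\<delta> * f w = - (a v w / a v v) * (a v v * f v + a v w * f w)"
      using avv True by (simp add: field_simps)
    with fv True show ?thesis by simp
  next
    case False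
    then have "a x v = 0" using only x s v unfolding symmetric_on_def by auto
    with False show ?thesis by simp
  qed
  finally show "(\<Sum>y\<in>?V'. schur_pendant a v w x y * f y) = 0" .
qed

lemma nodal_edges_rtrancl_Diff:
  assumes s: "symmetric_on V a" and no_edge: "\<And>u y. u \<in> W \<Longrightarrow> (u, y) \<notin> nodal_edges V a f"
    and xy: "(x, y) \<in> (nodal_edges V a f)\<^sup>*"
  shows "(x, y) \<in> (nodal_edges (V - W) a f)\<^sup>*"
proof -
  have "nodal_edges V a f \<subseteq> nodal_edges (V - W) a f"
  proof
    fix p assume p: "p \<in> nodal_edges V a f"
    moreover obtain x y where xy: "p = (x, y)" by (cases p)
    moreover have "(y, x) \<in> nodal_edges V a f"
      using p nodal_edges_sym[OF s] unfolding xy sym_def by blast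
    ultimately show "p \<in> nodal_edges (V - W) a f"
      using no_edge unfolding nodal_edges_def adj_on_def by auto
  qed
  then show ?thesis using rtrancl_mono xy by blast
qed

lemma nodal_edges_rtrancl_schur_pendant:
  assumes s: "symmetric_on V a" and "v \<noteq> w" and leaf: "\<And>y. adj_on V a v y \<Longrightarrow> y = w"
    and xy: "x \<in> V - {v}" "(x, y) \<in> (nodal_edges V a f)\<^sup>*" "y \<in> V - {v}"
  shows "(x, y) \<in> (nodal_edges (V - {v}) (schur_pendant a v w) f)\<^sup>*"
proof -
  let ?E' = "nodal_edges (V - {v}) (schur_pendant a v w) f"
  have "nodal_edges V a f \<subseteq> ?E' \<union> {(v, w), (w, v)}"
  proof
    fix p assume "p \<in> nodal_edges V a f"
    then obtain x y where p: "p = (x, y)" and xy: "adj_on V a x y" "f x * a x y * f y < 0"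
      unfolding nodal_edges_def by blast
    show "p \<in> ?E' \<union> {(v, w), (w, v)}"
    proof (cases "x = v \<or> y = v")
      case True
      then show ?thesis using xy(1) leaf adj_on_sym[OF s] p by blast
    next
      case False
      then show ?thesis
        using xy p schur_pendant_off_diag[of x y a v w] unfolding nodal_edges_def adj_on_def by auto
    qed
  qed
  moreover have "?E' \<subseteq> (V - {v}) \<times> (V - {v})"
    unfolding nodal_edges_def adj_on_def by auto
  ultimately show ?thesis
    using rtrancl_avoid_pendant[of "nodal_edges V a f" ?E' v w "V - {v}" x y] assms by blast
qed

lemma flat_zero_or_nodal_singleton:
  assumes v: "v \<in> V" and nbrs: "\<And>y. adj_on V a v y \<Longrightarrow> (f v = 0 \<longrightarrow> f y = 0) \<and> 0 \<le> f v * a v y * f y"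
  shows "v \<in> flat_zeros V a f \<or> (f v \<noteq> 0 \<and> (\<forall>y. (v, y) \<notin> nodal_edges V a f))"
  using assms unfolding flat_zeros_def nodal_edges_def by force

lemma pendant_neg_nodal_singleton:
  assumes v: "v \<in> V" and leaf: "\<And>y. adj_on V a v y \<Longrightarrow> y = w"
    and avv: "a v v < 0" and avw: "a v w \<noteq> 0" and row: "a v v * f v + a v w * f w = 0"
  shows "v \<in> flat_zeros V a f \<or> (f v \<noteq> 0 \<and> (\<forall>y. (v, y) \<notin> nodal_edges V a f))"
proof (rule flat_zero_or_nodal_singleton[OF v])
  fix y assume "adj_on V a v y"
  then have y: "y = w" by (rule leaf)
  have fv: "f v = - (a v w * f w / a v v)"
    using row avv by (simp add: field_simps)
  \<comment> \<open>For a v v < 0 the eigen equation at v makes f v * a v w * f w a nonnegative square.\<close>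
  have "f v * a v w * f w = - (a v w * f w)\<^sup>2 / a v v"
    unfolding fv by (simp add: power2_eq_square)
  then have "0 \<le> f v * a v w * f w"
    using avv by (simp add: divide_nonneg_neg)
  moreover have "f v = 0 \<longrightarrow> f w = 0"
    using fv avw avv by auto
  ultimately show "(f v = 0 \<longrightarrow> f y = 0) \<and> 0 \<le> f v * a v y * f y"
    using y by simp
qed

lemma nodal_bound_step_isolated:
  assumes fin: "finite V" and s: "symmetric_on V a" and v: "v \<in> V"
    and iso: "\<And>y. \<not> adj_on V a v y" and ker: "in_kernel V a f"
    and IH: "in_kernel (V - {v}) a f \<Longrightarrow> qform_pos_codim (V - {v}) a (nodal_bound (V - {v}) a f)"
  shows "qform_pos_codim V a (nodal_bound V a f)"
proof -
  let ?U = "V - {v}"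
  have av: "a v y = 0" "a y v = 0" if "y \<in> V" "y \<noteq> v" for y
    using iso[of y] s v that unfolding adj_on_def symmetric_on_def by auto
  have "in_kernel ?U a f"
    using v av by (intro in_kernel_diff[OF fin ker]) auto
  then have "qform_pos_codim V a (nodal_bound ?U a f + 1)"
    using qform_pos_codim_insert_isolated[OF fin v s] av IH by blast
  moreover have "nodal_bound ?U a f < nodal_bound V a f"
  proof (rule nodal_bound_restrict(2)[of ?U V a a f, OF _ _ s fin])
    have no_edge: "(u, y) \<notin> nodal_edges V a f" if "u \<in> {v}" for u y
      using iso that unfolding nodal_edges_def by auto
    show "(x, y) \<in> (nodal_edges ?U a f)\<^sup>*" if "(x, y) \<in> (nodal_edges V a f)\<^sup>*" for x y
      by (rule nodal_edges_rtrancl_Diff[OF s no_edge that])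
    show "f y = 0" if "x \<in> ?U" "y \<in> V - ?U" "adj_on V a x y" "f x = 0" for x y
      using that iso adj_on_sym[OF s] by blast
    show "v \<in> flat_zeros V a f \<or> (f v \<noteq> 0 \<and> (\<forall>y. (v, y) \<notin> nodal_edges V a f))"
      using flat_zero_or_nodal_singleton[OF v] iso by blast
  qed (use v in auto)
  ultimately show ?thesis
    using qform_pos_codim_mono[of V a "nodal_bound ?U a f + 1" "nodal_bound V a f"] by simp
qed

lemma nodal_bound_step_pendant:
  assumes fin: "finite V" and s: "symmetric_on V a" and vw: "adj_on V a v w"
    and leaf: "\<And>y. adj_on V a v y \<Longrightarrow> y = w" and avv: "a v v \<noteq> 0" and ker: "in_kernel V a f"
    and IH: "in_kernel (V - {v}) (schur_pendant a v w) f \<Longrightarrow>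
      qform_pos_codim (V - {v}) (schur_pendant a v w) (nodal_bound (V - {v}) (schur_pendant a v w) f)"
  shows "qform_pos_codim V a (nodal_bound V a f)"
proof -
  let ?U = "V - {v}" and ?a' = "schur_pendant a v w"
  have v: "v \<in> V" and w: "w \<in> V" and "v \<noteq> w" and avw: "a v w \<noteq> 0"
    using vw unfolding adj_on_def by auto
  have only: "a v y = 0" if "y \<in> V" "y \<noteq> v" "y \<noteq> w" for y
    using leaf[of y] that v unfolding adj_on_def by auto
  have od: "\<And>x y. x \<noteq> y \<Longrightarrow> ?a' x y = a x y"
    by (rule schur_pendant_off_diag)
  have row: "a v v * f v + a v w * f w = 0"
    by (rule in_kernel_pendant_row[OF fin v w \<open>v \<noteq> w\<close> only ker])
  have pos: "qform_pos_codim ?U ?a' (nodal_bound ?U ?a' f)"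
    by (rule IH[OF in_kernel_schur_pendant[OF fin v w \<open>v \<noteq> w\<close> s avv only ker]])
  have "(x, y) \<in> (nodal_edges ?U ?a' f)\<^sup>*"
    if "x \<in> ?U" "y \<in> ?U" "(x, y) \<in> (nodal_edges V a f)\<^sup>*" for x y
    using nodal_edges_rtrancl_schur_pendant[OF s \<open>v \<noteq> w\<close> leaf] that by blast
  moreover have "f y = 0" if "x \<in> ?U" "y \<in> V - ?U" "adj_on V a x y" "f x = 0" for x y
  proof -
    have "y = v" "x = w" using that leaf adj_on_sym[OF s] by auto
    then show ?thesis using that(4) row avv by simp
  qed
  note restrict = nodal_bound_restrict[of ?U V ?a' a f, OF _ od s fin calculation this]
  show ?thesis
  proof (cases "0 < a v v")
    case True
    then have "qform_pos_codim V a (nodal_bound ?U ?a' f)"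
      by (rule qform_pos_codim_insert_pendant_pos[OF fin v w \<open>v \<noteq> w\<close> s _ only pos])
    then show ?thesis
      using restrict(1) by (rule qform_pos_codim_mono) auto
  next
    case False
    then have "a v v < 0" using avv by simp
    then have "qform_pos_codim V a (nodal_bound ?U ?a' f + 1)"
      by (rule qform_pos_codim_insert_pendant_neg[OF fin v w \<open>v \<noteq> w\<close> s _ only pos])
    moreover have "nodal_bound ?U ?a' f < nodal_bound V a f"
      using pendant_neg_nodal_singleton[where a = a and f = f, OF v leaf \<open>a v v < 0\<close> avw row] v
      by (intro restrict(2)) auto
    ultimately show ?thesis
      using qform_pos_codim_mono[of V a "nodal_bound ?U ?a' f + 1" "nodal_bound V a f"] by simp
  qed
qed

lemma nodal_bound_step_pendant_zero:
  assumes fin: "finite V" and s: "symmetric_on V a" and vw: "adj_on V a v w"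
    and leaf: "\<And>y. adj_on V a v y \<Longrightarrow> y = w" and avv: "a v v = 0" and ker: "in_kernel V a f"
    and IH: "in_kernel (V - {v} - {w}) a f \<Longrightarrow>
      qform_pos_codim (V - {v} - {w}) a (nodal_bound (V - {v} - {w}) a f)"
  shows "qform_pos_codim V a (nodal_bound V a f)"
proof -
  let ?U = "V - {v} - {w}"
  have v: "v \<in> V" and w: "w \<in> V" and "v \<noteq> w" and avw: "a v w \<noteq> 0"
    using vw unfolding adj_on_def by auto
  have only: "a v y = 0" if "y \<in> V" "y \<noteq> v" "y \<noteq> w" for y
    using leaf[of y] that v unfolding adj_on_def by auto
  have "a v w * f w = 0"
    using in_kernel_pendant_row[OF fin v w \<open>v \<noteq> w\<close> only ker] avv by simp
  then have fw: "f w = 0"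
    using avw by simp
  have axv: "a x v = 0" if "x \<in> V" "x \<noteq> v" "x \<noteq> w" for x
    using only[OF that] s v that(1) unfolding symmetric_on_def by metis
  have "in_kernel (V - {v, w}) a f"
    using axv fw v w by (intro in_kernel_diff[OF fin ker]) auto
  moreover have "V - {v, w} = ?U" by auto
  ultimately have "qform_pos_codim V a (nodal_bound ?U a f + 1)"
    using qform_pos_codim_insert_pendant_zero[OF fin v w \<open>v \<noteq> w\<close> s avv avw only] IH
    by simp
  moreover have "nodal_bound ?U a f < nodal_bound V a f"
  proof (rule nodal_bound_restrict(2)[of ?U V a a f, OF _ _ s fin])
    have no_edge: "(u, y) \<notin> nodal_edges V a f" if "u \<in> {v, w}" for u y
      using that fw leaf unfolding nodal_edges_def by auto
    show "(x, y) \<in> (nodal_edges ?U a f)\<^sup>*" if "(x, y) \<in> (nodal_edges V a f)\<^sup>*" for x y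
      using nodal_edges_rtrancl_Diff[of V a "{v, w}", OF s no_edge that] \<open>V - {v, w} = ?U\<close> by simp
    show "f y = 0" if "x \<in> ?U" "y \<in> V - ?U" "adj_on V a x y" "f x = 0" for x y
      using that leaf adj_on_sym[OF s] fw by auto
    show "v \<in> flat_zeros V a f \<or> (f v \<noteq> 0 \<and> (\<forall>y. (v, y) \<notin> nodal_edges V a f))"
      by (rule flat_zero_or_nodal_singleton[OF v]) (use leaf fw in auto)
  qed (use v in auto)
  ultimately show ?thesis
    using qform_pos_codim_mono[of V a "nodal_bound ?U a f + 1" "nodal_bound V a f"] by simp
qed

lemma qform_pos_codim_nodal_bound:
  assumes "finite V" and "symmetric_on V a" and "acyclic_on V a" and "in_kernel V a f"
  shows "qform_pos_codim V a (nodal_bound V a f)"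
  using assms
proof (induction "card V" arbitrary: V a rule: less_induct)
  case less
  note fin = less.prems(1) and s = less.prems(2) and acyc = less.prems(3) and ker = less.prems(4)
  have IH: "qform_pos_codim U a' (nodal_bound U a' f)"
    if "U \<subseteq> V" "v \<in> V" "v \<notin> U" "\<And>x y. x \<noteq> y \<Longrightarrow> a' x y = a x y" "in_kernel U a' f" for U a' v
  proof (rule less.hyps)
    have "U \<subset> V" using that(1-3) by blast
    then show "card U < card V" by (rule psubset_card_mono[OF fin])
  qed (use that fin finite_subset symmetric_on_restrict[OF _ _ s] acyclic_on_restrict[OF _ _ acyc]
      in auto)
  show ?case
  proof (cases "V = {}")
    case True
    then show ?thesis by (simp add: qform_pos_codim_empty)
  next
    case False
    then obtain v where v: "v \<in> V" and leaf: "\<And>y y'. adj_on V a v y \<Longrightarrow> adj_on V a v y' \<Longrightarrow> y = y'"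
      using acyclic_on_leaf[OF fin _ acyc] by blast
    consider "\<And>y. \<not> adj_on V a v y" | w where "adj_on V a v w" "a v v \<noteq> 0"
      | w where "adj_on V a v w" "a v v = 0"
      by blast
    then show ?thesis
    proof cases
      case 1
      then show ?thesis
        using IH[of "V - {v}" v a] v by (intro nodal_bound_step_isolated[OF fin s v _ ker]) auto
    next
      case (2 w)
      then show ?thesis
        using IH[of "V - {v}" v "schur_pendant a v w", OF _ v _ schur_pendant_off_diag] leaf
        by (intro nodal_bound_step_pendant[OF fin s _ _ _ ker]) auto
    next
      case (3 w)
      then show ?thesis
        using IH[of "V - {v} - {w}" v a] leaf v
        by (intro nodal_bound_step_pendant_zero[OF fin s _ _ _ ker]) auto
    qed
  qed
qed

section \<open>The upper bound\<close>

lemma equiv_representatives: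
  assumes eq: "equiv S r"
  obtains rep where "\<And>x y. (x, y) \<in> r \<Longrightarrow> rep x = rep y"
    and "\<And>x. x \<in> S \<Longrightarrow> rep x \<in> S" and "\<And>x. x \<in> S \<Longrightarrow> rep (rep x) = rep x"
    and "card (S // r) = card (rep ` S)"
proof
  define rep where "rep x = (SOME y. y \<in> r `` {x})" for x
  have in_r: "(x, rep x) \<in> r" if "x \<in> S" for x
  proof -
    have "x \<in> r `` {x}" using eq that unfolding equiv_def refl_on_def by auto
    then have "rep x \<in> r `` {x}" unfolding rep_def by (rule someI)
    then show ?thesis by simp
  qed
  show same: "rep x = rep y" if "(x, y) \<in> r" for x y
    unfolding rep_def using equiv_class_eq[OF eq that] by simp
  show rep_S: "rep x \<in> S" if "x \<in> S" for x
    using in_r[OF that] eq unfolding equiv_def refl_on_def by blast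
  show rep_rep: "rep (rep x) = rep x" if "x \<in> S" for x
    using same[OF in_r[OF that]] by simp
  have "S // r = (\<lambda>x. r `` {x}) ` rep ` S"
    unfolding quotient_def image_image using equiv_class_eq[OF eq in_r] by auto
  moreover have "inj_on (\<lambda>x. r `` {x}) (rep ` S)"
  proof (rule inj_onI)
    fix x y assume "x \<in> rep ` S" "y \<in> rep ` S" "r `` {x} = r `` {y}"
    then obtain x' y' where "x' \<in> S" "y' \<in> S" "x = rep x'" "y = rep y'" "(x, y) \<in> r"
      using eq_equiv_class_iff[OF eq] rep_S by blast
    then show "x = y" using same rep_rep by metis
  qed
  ultimately show "card (S // r) = card (rep ` S)"
    by (simp add: card_image)
qed

lemma qform_scaled_kernel_vector:
  assumes s: "symmetric_on V m" and ker: "in_kernel V m f"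
  shows "2 * qform V m (\<lambda>z. c z * f z) = - (\<Sum>x\<in>V. \<Sum>y\<in>V. (c x - c y)\<^sup>2 * (f x * m x y * f y))"
proof -
  have t1: "(\<Sum>x\<in>V. \<Sum>y\<in>V. (c x)\<^sup>2 * (f x * m x y * f y)) = 0"
  proof -
    have "(\<Sum>x\<in>V. \<Sum>y\<in>V. (c x)\<^sup>2 * (f x * m x y * f y)) = (\<Sum>x\<in>V. (c x)\<^sup>2 * f x * (\<Sum>y\<in>V. m x y * f y))"
      by (simp add: sum_distrib_left mult_ac)
    then show ?thesis using ker unfolding in_kernel_def by simp
  qed
  have t2: "(\<Sum>x\<in>V. \<Sum>y\<in>V. (c y)\<^sup>2 * (f x * m x y * f y)) = 0"
  proof -
    have "(\<Sum>x\<in>V. \<Sum>y\<in>V. (c y)\<^sup>2 * (f x * m x y * f y)) = (\<Sum>y\<in>V. \<Sum>x\<in>V. (c y)\<^sup>2 * (f x * m x y * f y))"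
      by (rule sum.swap)
    also have "\<dots> = (\<Sum>y\<in>V. (c y)\<^sup>2 * f y * (\<Sum>x\<in>V. m y x * f x))"
      using s unfolding symmetric_on_def by (simp add: sum_distrib_left mult_ac)
    finally show ?thesis using ker unfolding in_kernel_def by simp
  qed
  have "(\<Sum>x\<in>V. \<Sum>y\<in>V. (c x - c y)\<^sup>2 * (f x * m x y * f y))
      = (\<Sum>x\<in>V. \<Sum>y\<in>V. (c x)\<^sup>2 * (f x * m x y * f y))
        - 2 * (\<Sum>x\<in>V. \<Sum>y\<in>V. (c x * f x) * m x y * (c y * f y))
        + (\<Sum>x\<in>V. \<Sum>y\<in>V. (c y)\<^sup>2 * (f x * m x y * f y))"
    by (simp add: power2_diff algebra_simps sum.distrib sum_subtractf sum_distrib_left)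
  then show ?thesis unfolding qform_def t1 t2 by simp
qed

lemma qform_nonpos_if_constant_on_nodal_domains:
  assumes s: "symmetric_on V m" and ker: "in_kernel V m f"
    and c: "\<And>x y. (x, y) \<in> nodal_equiv V m f \<Longrightarrow> c x = c y"
  shows "qform V m (\<lambda>z. c z * f z) \<le> 0"
proof -
  \<comment> \<open>Every term with f x * m x y * f y < 0 comes from a nodal edge, on which c is constant.\<close>
  have "0 \<le> (c x - c y)\<^sup>2 * (f x * m x y * f y)" if "x \<in> V" "y \<in> V" for x y
  proof (cases "0 \<le> f x * m x y * f y \<or> x = y")
    case False
    then have "(x, y) \<in> nodal_edges V m f"
      using that unfolding nodal_edges_def adj_on_def by auto
    then have "(x, y) \<in> nodal_equiv V m f"
      unfolding nodal_equiv_def nodal_edges_def nodal_support_def adj_on_def by auto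
    then show ?thesis using c by simp
  qed auto
  then have "0 \<le> (\<Sum>x\<in>V. \<Sum>y\<in>V. (c x - c y)\<^sup>2 * (f x * m x y * f y))"
    by (intro sum_nonneg) auto
  then show ?thesis
    using qform_scaled_kernel_vector[OF s ker, of c] by linarith
qed

lemma sum_two_points:
  fixes h :: "'a \<Rightarrow> real"
  assumes "finite V" and "p \<noteq> q" and "p \<in> V" and "q \<in> V"
  shows "(\<Sum>z\<in>V. (if z = p then \<alpha> else if z = q then \<beta> else 0) * h z) = \<alpha> * h p + \<beta> * h q"
proof -
  have "(\<Sum>z\<in>V. (if z = p then \<alpha> else if z = q then \<beta> else 0) * h z)
     = (\<Sum>z\<in>V. (if z = p then \<alpha> * h p else 0) + (if z = q then \<beta> * h q else 0))"
    using assms by (intro sum.cong) auto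
  then show ?thesis using assms by (simp add: sum.distrib)
qed

lemma nodal_domain_constraints:
  assumes fin: "finite V" and s: "symmetric_on V m"
  obtains L where "length L + nodal_count V m f = card V"
    and "\<And>h. \<forall>l\<in>set L. (\<Sum>x\<in>V. l x * h x) = 0 \<Longrightarrow>
      \<exists>c. (\<forall>x y. (x, y) \<in> nodal_equiv V m f \<longrightarrow> c x = c y) \<and> (\<forall>z\<in>V. h z = c z * f z)"
proof -
  let ?S = "nodal_support V f"
  obtain rep where rep_eq: "\<And>x y. (x, y) \<in> nodal_equiv V m f \<Longrightarrow> rep x = rep y"
    and rep_S: "\<And>x. x \<in> ?S \<Longrightarrow> rep x \<in> ?S" and rep_rep: "\<And>x. x \<in> ?S \<Longrightarrow> rep (rep x) = rep x"
    and count: "card (?S // nodal_equiv V m f) = card (rep ` ?S)"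
    using equiv_representatives[OF equiv_nodal_equiv[OF s, of f]] by blast
  define N where "N = V - rep ` ?S"
  have "rep ` ?S \<subseteq> V" using rep_S unfolding nodal_support_def by blast
  then have cardN: "card N + nodal_count V m f = card V"
    unfolding N_def nodal_count_def count using fin
    by (simp add: card_Diff_subset finite_subset card_mono)
  \<comment> \<open>Off the support the constraint is h x = 0; at a non-representative x of a domain it is
    f (rep x) * h x = f x * h (rep x).\<close>
  define l where "l x z = (if f x = 0 then (if z = x then 1 else 0)
      else (if z = x then f (rep x) else if z = rep x then - f x else 0))" for x z
  obtain xs where xs: "set xs = N" "distinct xs"
    using finite_distinct_list[of N] fin unfolding N_def by auto
  show ?thesis
  proof
    show "length (map l xs) + nodal_count V m f = card V"
      using cardN xs distinct_card by fastforce
    fix h assume h: "\<forall>l\<in>set (map l xs). (\<Sum>x\<in>V. l x * h x) = 0"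
    define c where "c z = h (rep z) / f (rep z)" for z
    have "h z = c z * f z" if z: "z \<in> V" for z
    proof (cases "z \<in> N")
      case False
      then obtain x where "x \<in> ?S" "z = rep x" using z unfolding N_def by auto
      then have "z \<in> ?S" "rep z = z" using rep_S rep_rep by auto
      then show ?thesis unfolding c_def nodal_support_def by simp
    next
      case True
      then have constraint: "(\<Sum>x\<in>V. l z x * h x) = 0" using h xs by auto
      show ?thesis
      proof (cases "f z = 0")
        case True
        then have "(\<Sum>x\<in>V. l z x * h x) = h z"
          using fin z unfolding l_def by (simp add: if_distrib[of "\<lambda>t. t * h _"] cong: if_cong)
        then show ?thesis using constraint True by simp
      next
        case False
        then have zS: "z \<in> ?S" using z unfolding nodal_support_def by simp
        have "rep z \<noteq> z"
          using True zS unfolding N_def by (metis DiffD2 image_eqI)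
        moreover have "rep z \<in> V" "f (rep z) \<noteq> 0"
          using rep_S[OF zS] unfolding nodal_support_def by auto
        ultimately have "(\<Sum>x\<in>V. l z x * h x) = f (rep z) * h z + (- f z) * h (rep z)"
          unfolding l_def using False fin z by (simp add: sum_two_points)
        then show ?thesis
          using constraint \<open>f (rep z) \<noteq> 0\<close> unfolding c_def by (simp add: field_simps)
      qed
    qed
    moreover have "c x = c y" if "(x, y) \<in> nodal_equiv V m f" for x y
      using rep_eq[OF that] unfolding c_def by simp
    ultimately show "\<exists>c. (\<forall>x y. (x, y) \<in> nodal_equiv V m f \<longrightarrow> c x = c y) \<and> (\<forall>z\<in>V. h z = c z * f z)"
      by blast
  qed
qed

lemma qform_nonpos_codim_nodal_count:
  assumes fin: "finite V" and s: "symmetric_on V m" and ker: "in_kernel V m f"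
  obtains L where "length L + nodal_count V m f = card V"
    and "\<And>h. \<forall>l\<in>set L. (\<Sum>x\<in>V. l x * h x) = 0 \<Longrightarrow> qform V m h \<le> 0"
proof -
  obtain L where L: "length L + nodal_count V m f = card V"
    and scaled: "\<And>h. \<forall>l\<in>set L. (\<Sum>x\<in>V. l x * h x) = 0 \<Longrightarrow>
      \<exists>c. (\<forall>x y. (x, y) \<in> nodal_equiv V m f \<longrightarrow> c x = c y) \<and> (\<forall>z\<in>V. h z = c z * f z)"
    using nodal_domain_constraints[OF fin s] by blast
  have "qform V m h \<le> 0" if hL: "\<forall>l\<in>set L. (\<Sum>x\<in>V. l x * h x) = 0" for h
  proof -
    obtain c where c: "\<And>x y. (x, y) \<in> nodal_equiv V m f \<Longrightarrow> c x = c y" and h: "\<forall>z\<in>V. h z = c z * f z"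
      using scaled[OF hL] by blast
    have "qform V m h = qform V m (\<lambda>z. c z * f z)"
      unfolding qform_def using h by (intro sum.cong refl) auto
    also have "\<dots> \<le> 0"
      using qform_nonpos_if_constant_on_nodal_domains[OF s ker c] .
    finally show ?thesis .
  qed
  with L that show ?thesis by blast
qed

section \<open>Eigenvalue counts and the matrix statement\<close>

lemma in_kernel_diag_shift:
  assumes "finite V" and "\<And>x. x \<in> V \<Longrightarrow> (\<Sum>y\<in>V. a x y * f y) = \<mu> * f x"
  shows "in_kernel V (diag_shift a \<mu>) f"
  using assms unfolding in_kernel_def by (simp add: sum_diag_shift)

context eigenbasis
begin

lemma symmetric_on_diag_shift: "symmetric_on {..<n} (diag_shift a \<mu>)"
  unfolding symmetric_on_def diag_shift_def using sym by auto

lemma card_eigenvalues_partition: "card {i. i < n \<and> d i \<le> \<mu>} + card {i. i < n \<and> \<mu> < d i} = n"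
proof -
  have "{i. i < n \<and> d i \<le> \<mu>} \<union> {i. i < n \<and> \<mu> < d i} = {..<n}"
    "{i. i < n \<and> d i \<le> \<mu>} \<inter> {i. i < n \<and> \<mu> < d i} = {}"
    by auto
  then show ?thesis
    using card_Un_disjoint[of "{i. i < n \<and> d i \<le> \<mu>}" "{i. i < n \<and> \<mu> < d i}"] by simp
qed

lemma nodal_count_le_card_nonpos:
  assumes ker: "in_kernel {..<n} (diag_shift a \<mu>) f"
  shows "nodal_count {..<n} (diag_shift a \<mu>) f \<le> card {i. i < n \<and> d i \<le> \<mu>}"
proof (rule ccontr)
  let ?m = "diag_shift a \<mu>" and ?gt = "{i. i < n \<and> \<mu> < d i}"
  assume contra: "\<not> ?thesis"
  obtain L where L: "length L + nodal_count {..<n} ?m f = n"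
    and nonpos: "\<And>h. \<forall>l\<in>set L. (\<Sum>x<n. l x * h x) = 0 \<Longrightarrow> qform {..<n} ?m h \<le> 0"
    using qform_nonpos_codim_nodal_count[OF _ symmetric_on_diag_shift ker] by auto
  have "length L < card ?gt"
    using L card_eigenvalues_partition[of \<mu>] contra by linarith
  then have "\<exists>h. (\<exists>x<n. h x \<noteq> 0) \<and> (\<forall>l\<in>set L. (\<Sum>x<n. l x * h x) = 0) \<and> 0 < qform {..<n} ?m h"
    by (intro exists_orthogonal_qform_pos) auto
  with nonpos show False by fastforce
qed

lemma card_nonpos_le_nodal_bound:
  assumes ker: "in_kernel {..<n} (diag_shift a \<mu>) f" and acyc: "acyclic_on {..<n} (diag_shift a \<mu>)"
  shows "card {i. i < n \<and> d i \<le> \<mu>} \<le> nodal_bound {..<n} (diag_shift a \<mu>) f"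
proof (rule ccontr)
  let ?m = "diag_shift a \<mu>" and ?le = "{i. i < n \<and> d i \<le> \<mu>}"
  assume contra: "\<not> ?thesis"
  obtain L where L: "length L \<le> nodal_bound {..<n} ?m f"
    and pos: "\<forall>h. (\<forall>l\<in>set L. (\<Sum>x<n. l x * h x) = 0) \<longrightarrow> (\<exists>x\<in>{..<n}. h x \<noteq> 0) \<longrightarrow>
      0 < qform {..<n} ?m h"
    using qform_pos_codim_nodal_bound[OF _ symmetric_on_diag_shift acyc ker]
    unfolding qform_pos_codim_def by auto
  have "length L < card ?le"
    using L contra by linarith
  then have "\<exists>h. (\<exists>x<n. h x \<noteq> 0) \<and> (\<forall>l\<in>set L. (\<Sum>x<n. l x * h x) = 0) \<and> qform {..<n} ?m h \<le> 0"
    by (intro exists_orthogonal_qform_nonpos) auto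
  with pos show False by fastforce
qed

end

lemma rtrancl_of_chain:
  "ys \<noteq> [] \<Longrightarrow> \<forall>j<length ys - 1. (ys ! j, ys ! Suc j) \<in> R \<Longrightarrow> (hd ys, last ys) \<in> R\<^sup>*"
proof (induction ys)
  case Nil
  then show ?case by simp
next
  case (Cons y ys)
  show ?case
  proof (cases "ys = []")
    case True
    then show ?thesis by simp
  next
    case False
    have "(y, ys ! 0) \<in> R" using Cons.prems(2) False by (cases ys) auto
    moreover have "\<forall>j<length ys - 1. (ys ! j, ys ! Suc j) \<in> R"
    proof (intro allI impI)
      fix j assume "j < length ys - 1"
      then have "Suc j < length (y # ys) - 1" by simp
      then show "(ys ! j, ys ! Suc j) \<in> R" using Cons.prems(2) by fastforce
    qed
    then have "(hd ys, last ys) \<in> R\<^sup>*" using Cons.IH False by blast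
    ultimately show ?thesis using False by (simp add: hd_conv_nth converse_rtrancl_into_rtrancl)
  qed
qed

lemma chain_of_trancl:
  assumes "(x, y) \<in> R\<^sup>+"
  shows "\<exists>ys. length ys \<ge> 2 \<and> (\<forall>j<length ys - 1. (ys ! j, ys ! Suc j) \<in> R) \<and> hd ys = x \<and> last ys = y"
  using assms
proof (induction rule: trancl_induct)
  case (base y)
  then show ?case by (intro exI[of _ "[x, y]"]) auto
next
  case (step y z)
  then obtain ys where ys: "length ys \<ge> 2" "\<forall>j<length ys - 1. (ys ! j, ys ! Suc j) \<in> R"
    "hd ys = x" "last ys = y"
    by blast
  have ne: "ys \<noteq> []" using ys(1) by auto
  have "\<forall>j<length (ys @ [z]) - 1. ((ys @ [z]) ! j, (ys @ [z]) ! Suc j) \<in> R"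
  proof (intro allI impI)
    fix j assume j: "j < length (ys @ [z]) - 1"
    show "((ys @ [z]) ! j, (ys @ [z]) ! Suc j) \<in> R"
    proof (cases "j < length ys - 1")
      case True
      then have "Suc j < length ys" by simp
      then show ?thesis using ys(2) True by (simp add: nth_append)
    next
      case False
      have "j = length ys - 1" using False j by simp
      moreover have "ys ! (length ys - 1) = y" using ys(4) last_conv_nth[OF ne] by simp
      ultimately show ?thesis using ne step.hyps(2) by (simp add: nth_append)
    qed
  qed
  then show ?case using ys ne by (intro exI[of _ "ys @ [z]"]) auto
qed

lemma nodal_rel_eq_nodal_equiv:
  fixes A :: "real mat" and m :: "nat \<Rightarrow> nat \<Rightarrow> real"
  assumes A: "A \<in> carrier_mat n n" and adj: "adj A = adj_on {..<n} m"
    and sign: "\<And>x y. adj A x y \<Longrightarrow> 0 < f $ x * s x y * f $ y \<longleftrightarrow> f $ x * m x y * f $ y < 0"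
  shows "nodal_rel A s f = nodal_equiv {..<n} m (\<lambda>x. f $ x)"
proof -
  let ?E = "nodal_edges {..<n} m (\<lambda>x. f $ x)"
  have walk: "S_walk A s f ys \<longleftrightarrow> length ys \<ge> 2 \<and> (\<forall>j<length ys - 1. (ys ! j, ys ! Suc j) \<in> ?E)" for ys
    unfolding S_walk_def is_walk_def nodal_edges_def using adj sign by auto
  have "x = y \<or> (\<exists>ys. S_walk A s f ys \<and> hd ys = x \<and> last ys = y) \<longleftrightarrow> (x, y) \<in> ?E\<^sup>*" for x y
  proof
    assume "x = y \<or> (\<exists>ys. S_walk A s f ys \<and> hd ys = x \<and> last ys = y)"
    then show "(x, y) \<in> ?E\<^sup>*"
    proof
      assume "\<exists>ys. S_walk A s f ys \<and> hd ys = x \<and> last ys = y"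
      then obtain ys where "S_walk A s f ys" "hd ys = x" "last ys = y" by blast
      then show ?thesis using rtrancl_of_chain[of ys ?E] walk by fastforce
    qed simp
  next
    assume "(x, y) \<in> ?E\<^sup>*"
    then have "x = y \<or> (x, y) \<in> ?E\<^sup>+" by (auto simp: rtrancl_eq_or_trancl)
    then show "x = y \<or> (\<exists>ys. S_walk A s f ys \<and> hd ys = x \<and> last ys = y)"
      using chain_of_trancl[of x y ?E] walk by blast
  qed
  then show ?thesis
    using A unfolding nodal_rel_def nodal_equiv_def nodal_support_def by auto
qed

lemma strong_nodal_bounds:
  fixes A :: "real mat" and b :: "nat \<Rightarrow> nat \<Rightarrow> real"
  assumes A: "A \<in> carrier_mat n n" and basis: "eigenbasis n b p d" and acyclic: "\<not> has_cycle A"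
    and adj: "\<And>x y. adj A x y \<longleftrightarrow> x < n \<and> y < n \<and> x \<noteq> y \<and> b x y \<noteq> 0"
    and sign: "\<And>x y. adj A x y \<Longrightarrow> 0 < f $ x * s x y * f $ y \<longleftrightarrow> f $ x * b x y * f $ y < 0"
    and ker: "\<And>x. x < n \<Longrightarrow> (\<Sum>y<n. b x y * f $ y) = \<mu> * f $ x"
  shows "strong_nodal_count A s f \<le> card {i. i < n \<and> d i \<le> \<mu>}"
    and "card {i. i < n \<and> d i \<le> \<mu>} \<le> strong_nodal_count A s f
      + card {x. x < n \<and> f $ x = 0 \<and> (\<forall>y. adj A x y \<longrightarrow> f $ y = 0)}"
proof -
  let ?m = "diag_shift b \<mu>"
  have adj_m: "adj A = adj_on {..<n} ?m"
    using adj by (auto simp: fun_eq_iff adj_on_def diag_shift_def)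
  have "nodal_rel A s f = nodal_equiv {..<n} ?m (\<lambda>x. f $ x)"
    by (rule nodal_rel_eq_nodal_equiv[OF A adj_m]) (auto simp: sign adj_def diag_shift_def)
  moreover have "{x. x < dim_row A \<and> f $ x \<noteq> 0} = nodal_support {..<n} (\<lambda>x. f $ x)"
    using A unfolding nodal_support_def by auto
  ultimately have count: "strong_nodal_count A s f = nodal_count {..<n} ?m (\<lambda>x. f $ x)"
    unfolding strong_nodal_count_def nodal_count_def by simp
  have flat: "{x. x < n \<and> f $ x = 0 \<and> (\<forall>y. adj A x y \<longrightarrow> f $ y = 0)} = flat_zeros {..<n} ?m (\<lambda>x. f $ x)"
    unfolding flat_zeros_def adj_m by auto
  have acyc: "acyclic_on {..<n} ?m"
    using acyclic unfolding acyclic_on_def has_cycle_def adj_m .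
  have ker_m: "in_kernel {..<n} ?m (\<lambda>x. f $ x)"
    using ker by (intro in_kernel_diag_shift) auto
  show "strong_nodal_count A s f \<le> card {i. i < n \<and> d i \<le> \<mu>}"
    unfolding count by (rule eigenbasis.nodal_count_le_card_nonpos[OF basis ker_m])
  show "card {i. i < n \<and> d i \<le> \<mu>} \<le> strong_nodal_count A s f
      + card {x. x < n \<and> f $ x = 0 \<and> (\<forall>y. adj A x y \<longrightarrow> f $ y = 0)}"
    unfolding count flat by (rule eigenbasis.card_nonpos_le_nodal_bound[OF basis ker_m acyc])
qed

lemma card_eigenvalues_eq_multiset:
  fixes d lam :: "nat \<Rightarrow> real"
  assumes "mset (map d [0..<n]) = mset (map lam [1..<Suc n])"
  shows "card {i. i < n \<and> P (d i)} = card {i. i < n \<and> P (lam (Suc i))}"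
proof -
  have "card {i. i < n \<and> P (d i)} = card {i. i < length (map d [0..<n]) \<and> P (map d [0..<n] ! i)}"
    by (intro arg_cong[where f = card] Collect_cong) auto
  also have "\<dots> = length (filter P (map d [0..<n]))"
    by (simp only: length_filter_conv_card)
  also have "\<dots> = length (filter P (map lam [1..<Suc n]))"
    by (metis assms mset_filter size_mset)
  also have "\<dots> = card {i. i < length (map lam [1..<Suc n]) \<and> P (map lam [1..<Suc n] ! i)}"
    by (simp only: length_filter_conv_card)
  also have "\<dots> = card {i. i < n \<and> P (lam (Suc i))}"
    by (intro arg_cong[where f = card] Collect_cong) (auto simp del: upt_Suc)
  finally show ?thesis .
qed

lemma card_le_eigenvalue_block:
  fixes lam :: "nat \<Rightarrow> real"
  assumes sorted: "\<And>i j. 1 \<le> i \<Longrightarrow> i \<le> j \<Longrightarrow> j \<le> n \<Longrightarrow> lam i \<le> lam j"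
    and r: "1 \<le> r" and kr: "k + r - 1 \<le> n"
    and equal: "\<And>i. k \<le> i \<Longrightarrow> i \<le> k + r - 1 \<Longrightarrow> lam i = lam k"
    and above: "k + r \<le> n \<Longrightarrow> lam (k + r - 1) < lam (k + r)"
  shows "card {i. i < n \<and> lam (Suc i) \<le> lam k} = k + r - 1"
proof -
  have "{i. i < n \<and> lam (Suc i) \<le> lam k} = {..<k + r - 1}"
  proof (rule subset_antisym; rule subsetI)
    fix i assume i: "i \<in> {i. i < n \<and> lam (Suc i) \<le> lam k}"
    show "i \<in> {..<k + r - 1}"
    proof (rule ccontr)
      assume "i \<notin> {..<k + r - 1}"
      then have "k + r \<le> Suc i" "Suc i \<le> n" using i by auto
      then have "lam (k + r) \<le> lam (Suc i)" "lam (k + r - 1) < lam (k + r)"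
        using sorted[of "k + r" "Suc i"] above r by auto
      moreover have "lam (k + r - 1) = lam k" using equal[of "k + r - 1"] r by simp
      ultimately show False using i by simp
    qed
  next
    fix i assume i: "i \<in> {..<k + r - 1}"
    have "lam (Suc i) \<le> lam k"
      using sorted[of "Suc i" k] equal[of "Suc i"] i kr r by (cases "Suc i < k") auto
    then show "i \<in> {i. i < n \<and> lam (Suc i) \<le> lam k}" using i kr by simp
  qed
  then show ?thesis by simp
qed

lemma card_ge_eigenvalue_block:
  fixes lam :: "nat \<Rightarrow> real"
  assumes sorted: "\<And>i j. 1 \<le> i \<Longrightarrow> i \<le> j \<Longrightarrow> j \<le> n \<Longrightarrow> lam i \<le> lam j"
    and k: "1 \<le> k" "k \<le> n" and below: "1 < k \<Longrightarrow> lam (k - 1) < lam k"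
  shows "card {i. i < n \<and> lam k \<le> lam (Suc i)} = n - k + 1"
proof -
  have "{i. i < n \<and> lam k \<le> lam (Suc i)} = {k - 1..<n}"
  proof (rule subset_antisym; rule subsetI)
    fix i assume i: "i \<in> {i. i < n \<and> lam k \<le> lam (Suc i)}"
    show "i \<in> {k - 1..<n}"
    proof (rule ccontr)
      assume "i \<notin> {k - 1..<n}"
      then have "Suc i \<le> k - 1" "1 < k" using i by auto
      then have "lam (Suc i) \<le> lam (k - 1)" using sorted[of "Suc i" "k - 1"] k by simp
      with below \<open>1 < k\<close> i show False by simp
    qed
  next
    fix i assume "i \<in> {k - 1..<n}"
    then show "i \<in> {i. i < n \<and> lam k \<le> lam (Suc i)}"
      using sorted[of k "Suc i"] k by auto
  qed
  then show ?thesis using k by simp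
qed

lemma prod_linear_factors_upt:
  "(\<Prod>i\<in>{1..n}. [:- lam i, 1:]) = (\<Prod>a\<leftarrow>map lam [1..<Suc n]. [:- a, 1:])"
proof -
  have "(\<Prod>i\<in>{1..n}. [:- lam i, 1:]) = (\<Prod>i\<in>set [1..<Suc n]. [:- lam i, 1:])"
    by (simp only: set_upt atLeastLessThanSuc_atLeastAtMost)
  also have "\<dots> = prod_list (map (\<lambda>i. [:- lam i, 1:]) [1..<Suc n])"
    by (rule prod.distinct_set_conv_list) simp
  finally show ?thesis
    by (simp add: comp_def)
qed

lemma eigenvector_row_sum:
  assumes "A \<in> carrier_mat n n" and "eigenvector A f \<mu>" and "x < n"
  shows "(\<Sum>y<n. A $$ (x, y) * f $ y) = \<mu> * f $ x"
  using assms unfolding eigenvector_def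
  by (auto simp: scalar_prod_def atLeast0LessThan dest!: arg_cong[where f = "\<lambda>v. v $ x"])

lemma sig_product_pos_iff:
  assumes "adj A x y"
  shows "0 < f $ x * sig A x y * f $ y \<longleftrightarrow> f $ x * A $$ (x, y) * f $ y < 0"
    and "0 < f $ x * - sig A x y * f $ y \<longleftrightarrow> f $ x * - A $$ (x, y) * f $ y < 0"
  using assms unfolding adj_def sig_def by (auto simp: divide_less_0_iff zero_less_divide_iff)

theorem corollary5p3:
  fixes A :: "real mat" and n k r :: nat and lam :: "nat \<Rightarrow> real" and f :: "real vec"
  assumes A: "A \<in> carrier_mat n n" and sym: "A\<^sup>T = A"
    and acyclic: "\<not> has_cycle A"
    and lam_sorted: "\<And>i j. 1 \<le> i \<Longrightarrow> i \<le> j \<Longrightarrow> j \<le> n \<Longrightarrow> lam i \<le> lam j"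
    and lam_char: "char_poly A = (\<Prod>i\<in>{1..n}. [:- lam i, 1:])"
    and k: "1 \<le> k" and r: "1 \<le> r" and kr: "k + r - 1 \<le> n"
    and below: "1 < k \<Longrightarrow> lam (k - 1) < lam k"
    and equal: "\<And>i. k \<le> i \<Longrightarrow> i \<le> k + r - 1 \<Longrightarrow> lam i = lam k"
    and above: "k + r \<le> n \<Longrightarrow> lam (k + r - 1) < lam (k + r)"
    and ef: "eigenvector A f (lam k)"
  shows "int (k + r - 1) - int (card {x. x < n \<and> f $ x = 0 \<and> (\<forall>y. adj A x y \<longrightarrow> f $ y = 0)})
           \<le> int (strong_nodal_count A (sig A) f)
       \<and> strong_nodal_count A (sig A) f \<le> k + r - 1
       \<and> int (n - k + 1) - int (card {x. x < n \<and> f $ x = 0 \<and> (\<forall>y. adj A x y \<longrightarrow> f $ y = 0)})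
           \<le> int (strong_nodal_count A (\<lambda>i j. - sig A i j) f)
       \<and> strong_nodal_count A (\<lambda>i j. - sig A i j) f \<le> n - k + 1"
proof -
  obtain p d where basis: "eigenbasis n (\<lambda>x y. A $$ (x, y)) p d"
    and spec: "mset (map d [0..<n]) = mset (map lam [1..<Suc n])"
    using symmetric_mat_eigenbasis[OF A sym] lam_char unfolding prod_linear_factors_upt by blast
  have adj: "adj A x y \<longleftrightarrow> x < n \<and> y < n \<and> x \<noteq> y \<and> A $$ (x, y) \<noteq> 0" for x y
    using A unfolding adj_def by auto
  note ker = eigenvector_row_sum[OF A ef]
  have ker_neg: "(\<Sum>y<n. - A $$ (x, y) * f $ y) = - lam k * f $ x" if "x < n" for x
    using ker[OF that] by (simp add: sum_negf)
  note bounds = strong_nodal_bounds[OF A basis acyclic adj sig_product_pos_iff(1) ker]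
  note bounds_neg = strong_nodal_bounds[OF A eigenbasis.eigenbasis_uminus[OF basis] acyclic _
      sig_product_pos_iff(2) ker_neg]
  have "card {i. i < n \<and> d i \<le> lam k} = k + r - 1"
    using card_eigenvalues_eq_multiset[OF spec, of "\<lambda>t. t \<le> lam k"]
      card_le_eigenvalue_block[OF lam_sorted r kr equal above] by simp
  moreover have "card {i. i < n \<and> - d i \<le> - lam k} = n - k + 1"
    using card_eigenvalues_eq_multiset[OF spec, of "\<lambda>t. - t \<le> - lam k"]
      card_ge_eigenvalue_block[OF lam_sorted k _ below] kr r by simp
  ultimately show ?thesis
    using bounds bounds_neg adj by simp
qed

end
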